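(* Let $n\ge1$, $s\in(0,1)$, $p\in(1,\infty)$, and if $p<2$ assume $p>1/(1-s)$. Let $K:B_2\times\mathbb{R}^n\to[0,\infty)$ be measurable with $K(x,y)=K(x,-y)$ and suppose there are $\Lambda\ge\lambda>0$, $M>0$, $\gamma>0$ with $\lambda|y|^{-n-sp}\le K(x,y)\le\Lambda|y|^{-n-sp}$ for $x,y\in B_2$ and $0\le K(x,y)\le M|y|^{-n-\gamma}$ for $x\in B_2$, $y\in\mathbb{R}^n\setminus B_{1/4}$. Then for any $\delta>0$ there are $k\in(0,1/2]$ and $\eta>0$, depending on $\lambda,\Lambda,M,p,s,\gamma,\delta$, such that for every $x\in B_{3/4}$ the following holds: if $p\in(2,\infty)$, $$2^{p-2}k^{p-1}\operatorname{PV}\int_{x+y\in B_1}|\beta(x)-\beta(x+y)|^{p-2}(\beta(x)-\beta(x+y))K(x,y)\,dy+2^{p-2}\int_{\mathbb{R}^n\setminus B_{1/4}}|k\beta(x)+2(|8y|^\eta-1)|^{p-1}K(x,y)\,dy$$ $$+2^{p-1}\int_{\mathbb{R}^n\setminus B_{1/4}}(|8y|^\eta-1)^{p-1}K(x,y)\,dy<2^{1-p}\inf_{A\subset B_2,\,|A|>\delta}\int_AK(x,y)\,dy,$$ and if $p\in(1/(1-s),2)$, $$(3^{p-1}+2^{p-1})k^{p-1}\int_{\mathbb{R}^n}|\beta(x)-\beta(x+y)|^{p-1}K(x,y)\,dy+2^{p-1}\int_{\mathbb{R}^n\setminus B_{1/4}}(|8y|^\eta-1)^{p-1}K(x,y)\,dy<2^{1-p}\inf_{A\subset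 B_2,\,|A|>\delta}\int_AK(x,y)\,dy.$$
   Context: $B_r$ is the open ball of radius $r$ centred at the origin; $|A|$ is Lebesgue measure; the infimum is over measurable sets $A$. $\beta(x)=\big((1-|x|^2)^+\big)^2$. $\operatorname{PV}\int_{x+y\in B_1}$ means $\lim_{r\to0}\int_{\{x+y\in B_1\}\setminus B_r}$. *)

theory Defs
  imports "HOL-Analysis.Analysis"
begin

definition beta :: "'a::euclidean_space \<Rightarrow> real" where
  "beta x = (max 0 (1 - (norm x)\<^sup>2))\<^sup>2"

end

theory Submission
  imports Defs
begin

text \<open>Both left-hand sides are bounded, uniformly over the kernel class, by
  \<open>k^(p-1) C + c M J(\<eta>)\<close>, while the right-hand side is at least \<open>2^(1-p) \<lambda> 2^(-n-sp) \<delta>\<close>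
  because \<open>K(x,y) \<ge> \<lambda> 2^(-n-sp)\<close> on \<open>B_2\<close>. Here \<open>J(\<eta>)\<close> is the integral of
  \<open>(|8y|^\<eta> - 1)^(p-1) |y|^(-n-\<gamma>)\<close> over \<open>|y| \<ge> 1/4\<close>, which tends to \<open>0\<close> with \<open>\<eta>\<close> by dominated
  convergence; so first \<open>\<eta>\<close> and then \<open>k\<close> can be chosen small.

  The constant \<open>C\<close> comes from three estimates. Far from the origin \<open>K \<le> M |y|^(-n-\<gamma>)\<close> is integrable.
  Near the origin \<open>\<beta>\<close> is Lipschitz, so for \<open>p < 2\<close> the integrand is \<open>O(|y|^(p-1-n-sp))\<close>, integrable
  exactly when \<open>p(1-s) > 1\<close>. For \<open>p > 2\<close> the second difference of \<open>\<beta>\<close> is \<open>O(|y|^2)\<close>; as \<open>K\<close> is even,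
  the principal value only sees the even part of the integrand, which is \<open>O(|y|^(p-n-sp))\<close> and
  integrable because \<open>s < 1\<close>. Integrability of powers of \<open>|y|\<close> reduces to geometric series over
  dyadic shells.\<close>

lemma beta_nonneg: "0 \<le> beta x"
  by (simp add: beta_def)

lemma beta_le_one: "beta x \<le> 1"
  unfolding beta_def by (auto simp: max_def power_le_one)

lemma abs_beta_diff_le_one: "\<bar>beta x - beta y\<bar> \<le> 1"
  using beta_nonneg[of x] beta_le_one[of x] beta_nonneg[of y] beta_le_one[of y] by linarith

lemma beta_eq_inside: "norm z < 1 \<Longrightarrow> beta z = (1 - (norm z)\<^sup>2)\<^sup>2"
  unfolding beta_def by (simp add: max_def abs_square_le_1 less_imp_le)

lemma continuous_on_beta: "continuous_on UNIV (beta :: 'a::euclidean_space \<Rightarrow> real)"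
  unfolding beta_def[abs_def] by (intro continuous_intros)

lemma borel_measurable_beta [measurable]: "beta \<in> borel_measurable (borel :: 'a::euclidean_space measure)"
  by (intro borel_measurable_continuous_onI continuous_on_beta)

lemma abs_diff_squared_pos_part_le:
  fixes t u :: real
  assumes "0 \<le> t" "0 \<le> u"
  shows "\<bar>(max 0 (1 - t))\<^sup>2 - (max 0 (1 - u))\<^sup>2\<bar> \<le> 2 * \<bar>t - u\<bar>"
proof -
  define a b where "a = max 0 (1 - t)" and "b = max 0 (1 - u)"
  have ab: "0 \<le> a" "a \<le> 1" "0 \<le> b" "b \<le> 1" "\<bar>a - b\<bar> \<le> \<bar>t - u\<bar>"
    using assms by (auto simp: a_def b_def max_def)
  have "a\<^sup>2 - b\<^sup>2 = (a - b) * (a + b)"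
    by (simp add: power2_eq_square algebra_simps)
  then have "\<bar>a\<^sup>2 - b\<^sup>2\<bar> = \<bar>a - b\<bar> * (a + b)"
    using ab by (simp add: abs_mult)
  also have "\<dots> \<le> \<bar>t - u\<bar> * 2"
    using ab by (intro mult_mono) auto
  finally show ?thesis by (simp add: a_def b_def)
qed

lemma abs_beta_diff_le:
  fixes x y :: "'a::euclidean_space"
  assumes "norm x < 1" "norm y \<le> 1"
  shows "\<bar>beta x - beta (x + y)\<bar> \<le> 8 * norm y"
proof -
  have "\<bar>beta x - beta (x + y)\<bar> \<le> 2 * \<bar>(norm x)\<^sup>2 - (norm (x + y))\<^sup>2\<bar>"
    unfolding beta_def by (rule abs_diff_squared_pos_part_le) auto
  also have "(norm x)\<^sup>2 - (norm (x + y))\<^sup>2 = (norm x - norm (x + y)) * (norm x + norm (x + y))"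
    by (simp add: power2_eq_square algebra_simps)
  then have "\<bar>(norm x)\<^sup>2 - (norm (x + y))\<^sup>2\<bar> = \<bar>norm x - norm (x + y)\<bar> * (norm x + norm (x + y))"
    by (simp add: abs_mult)
  also have "\<dots> \<le> norm y * 4"
  proof (rule mult_mono)
    show "\<bar>norm x - norm (x + y)\<bar> \<le> norm y"
      by (metis add_diff_cancel_left' norm_triangle_ineq3 norm_minus_commute)
    show "norm x + norm (x + y) \<le> 4"
      using assms norm_triangle_ineq[of x y] by linarith
  qed auto
  finally show ?thesis by simp
qed

text \<open>Writing \<open>A = |x|\<^sup>2\<close>, \<open>B = 2 x\<bullet>y\<close>, \<open>c = |y|\<^sup>2\<close>, the second difference equals
  \<open>4c(1 - A) - 2c\<^sup>2 - 2B\<^sup>2\<close>, and \<open>B\<^sup>2 \<le> 4Ac\<close> by Cauchy--Schwarz.\<close>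
lemma abs_beta_second_difference_le:
  fixes x y :: "'a::euclidean_space"
  assumes "norm x < 3/4" "norm y < 1/4"
  shows "\<bar>2 * beta x - beta (x + y) - beta (x - y)\<bar> \<le> 14 * (norm y)\<^sup>2"
proof -
  have inside: "norm x < 1" "norm (x + y) < 1" "norm (x - y) < 1"
    using assms norm_triangle_ineq[of x y] norm_triangle_ineq4[of x y] by linarith+
  define A B c where "A = (norm x)\<^sup>2" and "B = 2 * (x \<bullet> y)" and "c = (norm y)\<^sup>2"
  have sq: "(norm (x + y))\<^sup>2 = A + B + c" "(norm (x - y))\<^sup>2 = A - B + c"
    by (simp_all add: A_def B_def c_def power2_norm_eq_inner inner_add inner_diff inner_commute)
  have eq: "2 * beta x - beta (x + y) - beta (x - y) = 4*c*(1 - A) - 2*c\<^sup>2 - 2*B\<^sup>2"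
    unfolding beta_eq_inside[OF inside(1)] beta_eq_inside[OF inside(2)] beta_eq_inside[OF inside(3)]
      sq A_def[symmetric]
    by (simp add: power2_eq_square algebra_simps)
  have A: "0 \<le> A" "A \<le> 1"
    using inside by (auto simp: A_def abs_square_le_1)
  have "(4 * norm y)\<^sup>2 \<le> 1"
    using assms by (intro power_le_one) auto
  then have c: "0 \<le> c" "c \<le> 1/16"
    by (auto simp: c_def power_mult_distrib)
  have "(x \<bullet> y)\<^sup>2 \<le> (norm x * norm y)\<^sup>2"
    by (metis Cauchy_Schwarz_ineq2 abs_ge_zero power2_abs power_mono)
  then have "B\<^sup>2 \<le> 4 * A * c"
    by (simp add: B_def A_def c_def power_mult_distrib)
  also have "\<dots> \<le> 4 * c"
    using A c by (simp add: mult_left_le_one_le)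
  finally have B: "B\<^sup>2 \<le> 4 * c" .
  have "0 \<le> c * (1 - A)" "c * (1 - A) \<le> c" "c\<^sup>2 \<le> c"
    using A c by (auto simp: mult_left_le power2_eq_square)
  then have "\<bar>4*c*(1 - A) - 2*c\<^sup>2 - 2*B\<^sup>2\<bar> \<le> 14 * c"
    using B zero_le_power2[of B] zero_le_power2[of c] by (simp only: mult.assoc abs_le_iff) linarith
  then show ?thesis
    using eq by (simp add: c_def)
qed

section \<open>Signed powers\<close>

lemma powr_times_self_diff_le:
  fixes q u v m :: real
  assumes q: "0 < q" and uv: "0 \<le> v" "v \<le> u" "u \<le> m"
  shows "u powr q * u - v powr q * v \<le> (q + 1) * m powr q * (u - v)"
proof (cases "v = 0 \<or> v = u")
  case True
  have "u powr q * u \<le> m powr q * u"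
    using uv q by (intro mult_right_mono powr_mono2) auto
  also have "\<dots> \<le> (q + 1) * m powr q * u"
    using uv q by (intro mult_right_mono) (simp_all add: distrib_right)
  finally show ?thesis using True by auto
next
  case False
  then have v: "0 < v" "v < u" using uv by auto
  have self: "t powr q * t = t powr (q + 1)" if "0 < t" for t :: real
    using that by (simp add: powr_add)
  obtain z where z: "v < z" "z < u" "u powr (q + 1) - v powr (q + 1) = (u - v) * ((q + 1) * z powr (q + 1 - 1))"
    using MVT2[of v u "\<lambda>t. t powr (q + 1)" "\<lambda>t. (q + 1) * t powr (q + 1 - 1)"] v
      has_real_derivative_powr[of _ "q + 1"] by auto
  have "z powr q \<le> m powr q"
    using z v uv q by (intro powr_mono2) auto
  then have "(u - v) * ((q + 1) * z powr q) \<le> (u - v) * ((q + 1) * m powr q)"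
    using v q by (intro mult_left_mono) auto
  then show ?thesis
    using z(3) self[of u] self[of v] v by (simp add: algebra_simps)
qed

lemma signed_powr_mono:
  fixes q u v :: real
  assumes "0 < q" "v \<le> u"
  shows "\<bar>v\<bar> powr q * v \<le> \<bar>u\<bar> powr q * u"
proof -
  consider "v \<le> 0" "0 \<le> u" | "0 \<le> v" | "u \<le> 0" using assms by linarith
  then show ?thesis
  proof cases
    case 1
    then show ?thesis by (meson mult_nonneg_nonneg mult_nonneg_nonpos order_trans powr_ge_zero abs_ge_zero)
  next
    case 2
    then show ?thesis using assms by (intro mult_mono powr_mono2) auto
  next
    case 3
    have "\<bar>u\<bar> powr q * (- u) \<le> \<bar>v\<bar> powr q * (- v)"
      using 3 assms by (intro mult_mono powr_mono2) auto
    then show ?thesis by simp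
  qed
qed

lemma signed_powr_diff_le:
  fixes q u v m :: real
  assumes q: "0 < q" and le: "v \<le> u" and uv: "\<bar>u\<bar> \<le> m" "\<bar>v\<bar> \<le> m"
  shows "\<bar>u\<bar> powr q * u - \<bar>v\<bar> powr q * v \<le> (q + 1) * m powr q * (u - v)"
proof -
  consider "0 \<le> v" | "u \<le> 0" | "v < 0" "0 < u" by linarith
  then show ?thesis
  proof cases
    case 1
    then show ?thesis
      using powr_times_self_diff_le[OF q 1 le, of m] uv le by simp
  next
    case 2
    then show ?thesis
      using powr_times_self_diff_le[OF q, of "- u" "- v" m] le uv by (simp add: algebra_simps)
  next
    case 3
    have "\<bar>u\<bar> powr q * u \<le> m powr q * u" "\<bar>v\<bar> powr q * (- v) \<le> m powr q * (- v)"
      using 3 uv q by (intro mult_right_mono powr_mono2; simp)+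
    moreover have "m powr q * (u - v) \<le> (q + 1) * m powr q * (u - v)"
      using 3 q by (intro mult_right_mono) (simp_all add: distrib_right)
    ultimately show ?thesis by (simp add: algebra_simps)
  qed
qed

lemma signed_powr_lipschitz:
  fixes q u v m :: real
  assumes "0 < q" "\<bar>u\<bar> \<le> m" "\<bar>v\<bar> \<le> m"
  shows "\<bar>\<bar>u\<bar> powr q * u - \<bar>v\<bar> powr q * v\<bar> \<le> (q + 1) * m powr q * \<bar>u - v\<bar>"
proof (cases "v \<le> u")
  case True
  then show ?thesis
    using signed_powr_diff_le[OF assms(1) True assms(2,3)] signed_powr_mono[OF assms(1) True] by simp
next
  case False
  then have "u \<le> v" by simp
  then show ?thesis
    using signed_powr_diff_le[OF assms(1) \<open>u \<le> v\<close> assms(3,2)] signed_powr_mono[OF assms(1) \<open>u \<le> v\<close>]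
    by (simp add: abs_minus_commute)
qed

lemma powr_abs_add_le:
  fixes a k g q :: real
  assumes "0 \<le> a" "a \<le> k" "0 \<le> g" "0 < q"
  shows "\<bar>a + 2 * g\<bar> powr q \<le> 2 powr q * k powr q + 4 powr q * g powr q"
proof -
  have "\<bar>a + 2 * g\<bar> powr q \<le> (2 * max k (2 * g)) powr q"
    using assms by (intro powr_mono2) auto
  also have "\<dots> = 2 powr q * max k (2 * g) powr q"
    using assms by (simp add: powr_mult)
  also have "max k (2 * g) powr q \<le> k powr q + 2 powr q * g powr q"
    using assms by (cases "k \<le> 2 * g") (auto simp: max_def powr_mult)
  finally show ?thesis
    using powr_mult[of 2 2 q] by (simp add: algebra_simps)
qed

lemma beta_signed_powr_second_difference:
  fixes x y :: "'a::euclidean_space" and q :: real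
  assumes x: "norm x < 3/4" and y: "norm y < 1/4" and q: "0 < q"
  defines "u \<equiv> beta x - beta (x + y)" and "w \<equiv> beta x - beta (x - y)"
  shows "\<bar>\<bar>u\<bar> powr q * u + \<bar>w\<bar> powr q * w\<bar> \<le> 14 * (q + 1) * 8 powr q * norm y powr (q + 2)"
proof -
  have "\<bar>u\<bar> \<le> 8 * norm y" "\<bar>- w\<bar> \<le> 8 * norm y"
    using abs_beta_diff_le[of x y] abs_beta_diff_le[of x "- y"] x y by (auto simp: u_def w_def)
  then have "\<bar>\<bar>u\<bar> powr q * u - \<bar>- w\<bar> powr q * (- w)\<bar> \<le> (q + 1) * (8 * norm y) powr q * \<bar>u - (- w)\<bar>"
    by (rule signed_powr_lipschitz[OF q])
  also have "\<dots> \<le> (q + 1) * (8 * norm y) powr q * (14 * (norm y)\<^sup>2)"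
    using abs_beta_second_difference_le[OF x y] q
    by (intro mult_left_mono) (auto simp: u_def w_def algebra_simps)
  also have "\<dots> = 14 * (q + 1) * 8 powr q * norm y powr (q + 2)"
    by (cases "y = 0") (simp_all add: powr_mult powr_add)
  finally show ?thesis by simp
qed

section \<open>Integrability of powers of the norm\<close>

lemma ball_sets_borel [measurable]: "ball (c::'a::euclidean_space) r \<in> sets borel"
  by simp

lemma ball_sets_lebesgue: "ball (c::'a::euclidean_space) r \<in> sets lebesgue"
  by (intro fmeasurableD lmeasurable_ball)

lemma borel_measurable_lebesgueI:
  "f \<in> borel_measurable (borel :: 'a::euclidean_space measure) \<Longrightarrow> f \<in> borel_measurable lebesgue"
  by (intro measurable_completion) simp

lemma exists_dyadic_shell_below:
  fixes t R :: real
  assumes "0 < t" "t < R"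
  obtains j where "R * (1/2) ^ Suc j \<le> t" "t < R * (1/2) ^ j"
proof -
  obtain n where "(1/2::real) ^ n < t / R"
    using real_arch_pow_inv[of "t / R" "1/2"] assms by auto
  then have "R * (1/2) ^ n \<le> t"
    using assms by (simp add: field_simps)
  moreover have "\<not> R * (1/2) ^ 0 \<le> t"
    using assms by simp
  ultimately obtain j where "\<forall>i\<le>j. \<not> R * (1/2) ^ i \<le> t" "R * (1/2) ^ Suc j \<le> t"
    using ex_least_nat_less[of "\<lambda>j. R * (1/2) ^ j \<le> t" n] by blast
  then show ?thesis using that by auto
qed

lemma exists_dyadic_shell_above:
  fixes t R :: real
  assumes "0 < R" "R \<le> t"
  obtains j where "R * 2 ^ j \<le> t" "t < R * 2 ^ Suc j"
proof -
  obtain n where "t / R < (2::real) ^ n"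
    using real_arch_pow[of 2 "t / R"] by auto
  then have "t < R * 2 ^ n"
    using assms by (simp add: field_simps)
  moreover have "\<not> t < R * 2 ^ 0"
    using assms by simp
  ultimately obtain j where "\<forall>i\<le>j. \<not> t < R * 2 ^ i" "t < R * 2 ^ Suc j"
    using ex_least_nat_less[of "\<lambda>j. t < R * 2 ^ j" n] by blast
  then show ?thesis using that[of j] by (simp add: not_less)
qed

lemma nn_integral_geometric_balls_finite:
  fixes R \<rho> C \<sigma> :: real
  assumes "0 < R" "0 < \<rho>" "0 \<le> C" "0 \<le> \<sigma>" "\<sigma> * \<rho> ^ DIM('a) < 1"
  shows "(\<integral>\<^sup>+ y. (\<Sum>j. ennreal (C * \<sigma> ^ j) * indicator (ball (0::'a::euclidean_space) (R * \<rho> ^ j)) y)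
           \<partial>lebesgue) < \<infinity>"
proof -
  define V where "V = measure lebesgue (ball (0::'a) 1)"
  have V: "emeasure lebesgue (ball (0::'a) 1) = ennreal V" "0 \<le> V"
    by (simp_all add: V_def emeasure_eq_measure2 lmeasurable_ball)
  have ball: "emeasure lebesgue (ball (0::'a) (R * \<rho> ^ j)) = ennreal ((R * \<rho> ^ j) ^ DIM('a) * V)" for j
    using emeasure_lebesgue_ball_conv_unit_ball[of "R * \<rho> ^ j" "0::'a"] assms V
    by (simp add: ennreal_mult)
  have "(\<integral>\<^sup>+ y. (\<Sum>j. ennreal (C * \<sigma> ^ j) * indicator (ball (0::'a) (R * \<rho> ^ j)) y) \<partial>lebesgue)
      = (\<Sum>j. ennreal (C * \<sigma> ^ j) * emeasure lebesgue (ball (0::'a) (R * \<rho> ^ j)))"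
  proof -
    have "(\<lambda>y. ennreal (C * \<sigma> ^ j) * indicator (ball (0::'a) (R * \<rho> ^ j)) y) \<in> borel_measurable lebesgue" for j
      by (intro borel_measurable_lebesgueI) measurable
    then show ?thesis
      by (simp add: nn_integral_suminf nn_integral_cmult_indicator ball_sets_lebesgue)
  qed
  also have "\<dots> = (\<Sum>j. ennreal (C * R ^ DIM('a) * V * (\<sigma> * \<rho> ^ DIM('a)) ^ j))"
  proof -
    have e1: "C * \<sigma> ^ j * ((R * \<rho> ^ j) ^ DIM('a) * V) = C * R ^ DIM('a) * V * (\<sigma> * \<rho> ^ DIM('a)) ^ j" for j
      by (simp add: power_mult_distrib flip: power_mult) (simp add: power_mult mult.commute mult.left_commute)
    have e2: "ennreal (C * \<sigma> ^ j) * emeasure lebesgue (ball (0::'a) (R * \<rho> ^ j))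
        = ennreal (C * \<sigma> ^ j * ((R * \<rho> ^ j) ^ DIM('a) * V))" for j
      using assms V by (simp add: ball ennreal_mult)
    show ?thesis by (simp only: e1 e2)
  qed
  also have "\<dots> = ennreal (\<Sum>j. C * R ^ DIM('a) * V * (\<sigma> * \<rho> ^ DIM('a)) ^ j)"
    using assms V by (intro suminf_ennreal2 summable_mult summable_geometric) auto
  finally show ?thesis by simp
qed

lemma power_powr_swap: "0 < (x::real) \<Longrightarrow> (x ^ j) powr a = (x powr a) ^ j"
  by (simp add: powr_power powr_powr mult.commute flip: powr_realpow)

lemma nn_integral_norm_powr_ball_finite:
  fixes R a :: real
  assumes R: "0 < R" and a: "0 \<le> a" "a < DIM('a)"
  shows "(\<integral>\<^sup>+ y. ennreal (indicator (ball (0::'a::euclidean_space) R) y * norm y powr (-a)) \<partial>lebesgue) < \<infinity>"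
proof (rule le_less_trans[OF nn_integral_mono nn_integral_geometric_balls_finite])
  fix y :: 'a
  show "ennreal (indicator (ball 0 R) y * norm y powr (-a))
    \<le> (\<Sum>j. ennreal ((R/2) powr (-a) * ((1/2) powr (-a)) ^ j) * indicator (ball 0 (R * (1/2) ^ j)) y)"
  proof (cases "y \<in> ball 0 R \<and> y \<noteq> 0")
    case True
    then obtain j where j: "R / 2 * (1/2) ^ j \<le> norm y" "norm y < R * (1/2) ^ j"
      using exists_dyadic_shell_below[of "norm y" R] by auto
    have "norm y powr (-a) \<le> (R / 2 * (1/2) ^ j) powr (-a)"
      using j a R by (intro powr_mono2') auto
    also have "\<dots> = (R/2) powr (-a) * ((1/2) powr (-a)) ^ j"
      using R by (subst powr_mult) (simp_all add: power_powr_swap)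
    finally have "ennreal (indicator (ball 0 R) y * norm y powr (-a))
        \<le> ennreal ((R/2) powr (-a) * ((1/2) powr (-a)) ^ j) * indicator (ball 0 (R * (1/2) ^ j)) y"
      using True j by (simp add: ennreal_leI)
    also have "\<dots> \<le> (\<Sum>j. ennreal ((R/2) powr (-a) * ((1/2) powr (-a)) ^ j) * indicator (ball 0 (R * (1/2) ^ j)) y)"
      using sum_le_suminf[OF summableI, of "{j}"] by simp
    finally show ?thesis .
  qed auto
next
  have "(1/2) powr (-a) * (1/2) ^ DIM('a) = (1/2::real) powr (DIM('a) - a)"
    by (simp add: powr_diff powr_realpow powr_minus_divide)
  then show "(1/2) powr (-a) * (1/2) ^ DIM('a) < (1::real)"
    using a by (simp add: powr01_less_one)
qed (use R in auto)

lemma nn_integral_norm_powr_outside_ball_finite: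
  fixes R a :: real
  assumes R: "0 < R" and a: "DIM('a) < a"
  shows "(\<integral>\<^sup>+ y. ennreal (indicator (UNIV - ball (0::'a::euclidean_space) R) y * norm y powr (-a))
           \<partial>lebesgue) < \<infinity>"
proof (rule le_less_trans[OF nn_integral_mono nn_integral_geometric_balls_finite])
  fix y :: 'a
  show "ennreal (indicator (UNIV - ball 0 R) y * norm y powr (-a))
    \<le> (\<Sum>j. ennreal (R powr (-a) * (2 powr (-a)) ^ j) * indicator (ball 0 (2 * R * 2 ^ j)) y)"
  proof (cases "y \<in> ball 0 R")
    case False
    then obtain j where j: "R * 2 ^ j \<le> norm y" "norm y < 2 * R * 2 ^ j"
      using exists_dyadic_shell_above[of R "norm y"] R by (auto simp: mult_ac)
    have "norm y powr (-a) \<le> (R * 2 ^ j) powr (-a)"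
      using j a R by (intro powr_mono2') auto
    also have "\<dots> = R powr (-a) * (2 powr (-a)) ^ j"
      using R by (subst powr_mult) (simp_all add: power_powr_swap)
    finally have "ennreal (indicator (UNIV - ball 0 R) y * norm y powr (-a))
        \<le> ennreal (R powr (-a) * (2 powr (-a)) ^ j) * indicator (ball 0 (2 * R * 2 ^ j)) y"
      using False j by (simp add: ennreal_leI)
    also have "\<dots> \<le> (\<Sum>j. ennreal (R powr (-a) * (2 powr (-a)) ^ j) * indicator (ball 0 (2 * R * 2 ^ j)) y)"
      using sum_le_suminf[OF summableI, of "{j}"] by simp
    finally show ?thesis .
  qed auto
next
  have "2 powr (-a) * 2 ^ DIM('a) = (2::real) powr (DIM('a) - a)"
    by (simp add: powr_diff powr_realpow powr_minus_divide)
  then show "2 powr (-a) * 2 ^ DIM('a) < (1::real)"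
    using a by (simp add: powr_less_one)
qed (use R in auto)

lemma set_integrable_norm_powr_ball:
  fixes R a :: real
  assumes "0 < R" "0 \<le> a" "a < DIM('a)"
  shows "set_integrable lebesgue (ball (0::'a::euclidean_space) R) (\<lambda>y. norm y powr (-a))"
  unfolding set_integrable_def
proof (rule integrableI_nonneg)
  show "(\<lambda>y::'a. indicator (ball 0 R) y *\<^sub>R norm y powr (-a)) \<in> borel_measurable lebesgue"
    by (intro borel_measurable_lebesgueI) measurable
qed (use nn_integral_norm_powr_ball_finite[OF assms] in auto)

lemma set_integrable_norm_powr_outside_ball:
  fixes R a :: real
  assumes "0 < R" "DIM('a) < a"
  shows "set_integrable lebesgue (UNIV - ball (0::'a::euclidean_space) R) (\<lambda>y. norm y powr (-a))"
  unfolding set_integrable_def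
proof (rule integrableI_nonneg)
  show "(\<lambda>y::'a. indicator (UNIV - ball 0 R) y *\<^sub>R norm y powr (-a)) \<in> borel_measurable lebesgue"
    by (intro borel_measurable_lebesgueI) measurable
qed (use nn_integral_norm_powr_outside_ball_finite[OF assms] in auto)

lemma set_integral_norm_powr_nonneg: "0 \<le> (LINT y : A | lebesgue. norm (y::'a::euclidean_space) powr a)"
  unfolding set_lebesgue_integral_def by (intro Bochner_Integration.integral_nonneg) simp

lemma set_integrable_integral_le:
  fixes f g :: "'b \<Rightarrow> real"
  assumes g: "set_integrable M A g" and f: "set_borel_measurable M A f"
    and le: "\<And>x. x \<in> A \<Longrightarrow> \<bar>f x\<bar> \<le> g x"
  shows "set_integrable M A f" "(LINT x : A | M. f x) \<le> (LINT x : A | M. g x)"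
proof -
  show fi: "set_integrable M A f"
    using le by (intro set_integrable_bound[OF g f] AE_I2) force
  show "(LINT x : A | M. f x) \<le> (LINT x : A | M. g x)"
    using le by (intro set_integral_mono[OF fi g]) (auto simp: abs_le_iff)
qed

section \<open>Principal values of even integrands\<close>

lemma uminus_as_affine:
  "(\<lambda>x::'a::euclidean_space. 0 + (\<Sum>j\<in>Basis. ((-1) * (x \<bullet> j)) *\<^sub>R j)) = uminus"
  by (rule ext) (simp add: sum_negf euclidean_representation)

lemma measurable_uminus_lebesgue: "(uminus :: 'a::euclidean_space \<Rightarrow> 'a) \<in> lebesgue \<rightarrow>\<^sub>M lebesgue"
  using lebesgue_affine_measurable[where c="\<lambda>_::'a. -1" and t=0, unfolded uminus_as_affine] by simp

lemma distr_lebesgue_uminus: "distr lebesgue lebesgue uminus = (lebesgue :: 'a::euclidean_space measure)"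
  using lebesgue_affine_euclidean[where c="\<lambda>_::'a. -1" and t=0, unfolded uminus_as_affine]
  by (simp add: density_1)

lemma integral_reflect_lebesgue:
  fixes f :: "'a::euclidean_space \<Rightarrow> real"
  assumes "f \<in> borel_measurable lebesgue"
  shows "(\<integral>y. f (- y) \<partial>lebesgue) = integral\<^sup>L lebesgue f"
  using integral_distr[OF measurable_uminus_lebesgue assms] by (simp add: distr_lebesgue_uminus)

lemma integrable_reflect_lebesgue:
  fixes f :: "'a::euclidean_space \<Rightarrow> real"
  assumes "integrable lebesgue f"
  shows "integrable lebesgue (\<lambda>y. f (- y))"
  using assms integrable_distr_eq[OF measurable_uminus_lebesgue borel_measurable_integrable[OF assms]]
  by (simp add: distr_lebesgue_uminus)

lemma set_integral_symmetric_set: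
  fixes F :: "'a::euclidean_space \<Rightarrow> real"
  assumes sym: "\<And>y. - y \<in> A \<longleftrightarrow> y \<in> A" and F: "set_integrable lebesgue A F"
  shows "(LINT y : A | lebesgue. (F y + F (- y)) / 2) = (LINT y : A | lebesgue. F y)"
proof -
  have ind: "indicator A (- y) = (indicator A y :: real)" for y
    using sym by (simp add: indicator_def)
  have F': "set_integrable lebesgue A (\<lambda>y. F (- y))"
    using integrable_reflect_lebesgue[OF F[unfolded set_integrable_def]] by (simp add: set_integrable_def ind)
  have "(LINT y : A | lebesgue. F (- y)) = (LINT y : A | lebesgue. F y)"
    using integral_reflect_lebesgue[OF borel_measurable_integrable[OF F[unfolded set_integrable_def]]]
    by (simp add: set_lebesgue_integral_def ind)
  then show ?thesis
    using F F' by (simp add: set_integral_divide_zero)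
qed

lemma tendsto_set_integral_annuli:
  fixes H :: "'a::euclidean_space \<Rightarrow> real"
  assumes \<rho>: "0 < \<rho>" and H: "set_integrable lebesgue (ball 0 \<rho>) H"
  shows "((\<lambda>r. LINT y : ball 0 \<rho> - ball 0 r | lebesgue. H y) \<longlongrightarrow> (LINT y : ball 0 \<rho> | lebesgue. H y))
    (at_right 0)"
proof (rule tendsto_at_right_sequentially[OF \<rho>])
  fix R :: "nat \<Rightarrow> real"
  assume R: "\<And>n. 0 < R n" "\<And>n. R n < \<rho>" "decseq R" "R \<longlonglongrightarrow> 0"
  define A where "A n = ball 0 \<rho> - ball (0::'a) (R n)" for n
  have A_sets: "A n \<in> sets lebesgue" for n
    by (simp add: A_def ball_sets_lebesgue sets.Diff)
  have HU: "set_integrable lebesgue (\<Union>n. A n) H"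
    using H by (rule set_integrable_subset) (auto simp: A_def A_sets)
  have "(\<lambda>n. LINT y : A n | lebesgue. H y) \<longlonglongrightarrow> (LINT y : (\<Union>n. A n) | lebesgue. H y)"
  proof (rule set_integral_cont_up[OF A_sets _ HU])
    show "incseq A"
    proof (rule incseq_SucI)
      show "A n \<subseteq> A (Suc n)" for n
        using decseq_SucD[OF R(3), of n] by (auto simp: A_def)
    qed
  qed
  also have "(LINT y : (\<Union>n. A n) | lebesgue. H y) = (LINT y : ball 0 \<rho> | lebesgue. H y)"
  proof (rule set_integral_cong_set)
    have "y \<in> (\<Union>n. A n) \<longleftrightarrow> y \<in> ball 0 \<rho>" if y: "y \<noteq> 0" for y :: 'a
    proof -
      obtain N where "\<forall>n\<ge>N. R n < norm y"
        using order_tendstoD(2)[OF R(4), of "norm y"] y by (auto simp: eventually_sequentially)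
      then show ?thesis by (auto simp: A_def not_less intro: less_imp_le)
    qed
    then show "AE y in lebesgue. y \<in> ball 0 \<rho> \<longleftrightarrow> y \<in> (\<Union>n. A n)"
      using AE_completion[OF AE_lborel_singleton[of 0]] by (auto elim!: AE_mp)
    show "set_borel_measurable lebesgue (\<Union>n. A n) H"
      using HU unfolding set_integrable_def set_borel_measurable_def by (rule borel_measurable_integrable)
    show "set_borel_measurable lebesgue (ball 0 \<rho>) H"
      using H unfolding set_integrable_def set_borel_measurable_def by (rule borel_measurable_integrable)
  qed
  finally show "(\<lambda>n. LINT y : ball 0 \<rho> - ball 0 (R n) | lebesgue. H y) \<longlonglongrightarrow> (LINT y : ball 0 \<rho> | lebesgue. H y)"
    by (simp add: A_def)
qed

lemma principal_value_by_symmetrization: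
  fixes F :: "'a::euclidean_space \<Rightarrow> real"
  assumes S: "S \<in> sets lebesgue" "ball 0 \<rho> \<subseteq> S" and \<rho>: "0 < \<rho>"
    and F: "\<And>r. 0 < r \<Longrightarrow> set_integrable lebesgue (S - ball 0 r) F"
    and H: "set_integrable lebesgue (ball 0 \<rho>) (\<lambda>y. (F y + F (- y)) / 2)"
  shows "((\<lambda>r. LINT y : S - ball 0 r | lebesgue. F y) \<longlongrightarrow>
           (LINT y : ball 0 \<rho> | lebesgue. (F y + F (- y)) / 2) + (LINT y : S - ball 0 \<rho> | lebesgue. F y))
         (at_right 0)"
proof -
  have split: "(LINT y : S - ball 0 r | lebesgue. F y)
      = (LINT y : ball 0 \<rho> - ball 0 r | lebesgue. (F y + F (- y)) / 2) + (LINT y : S - ball 0 \<rho> | lebesgue. F y)"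
    if r: "0 < r" "r < \<rho>" for r
  proof -
    have "S - ball 0 r = (ball 0 \<rho> - ball 0 r) \<union> (S - ball 0 \<rho>)" "(ball 0 \<rho> - ball 0 r) \<inter> (S - ball 0 \<rho>) = {}"
      using S r by auto
    moreover have annulus: "set_integrable lebesgue (ball 0 \<rho> - ball 0 r) F"
      using S r by (intro set_integrable_subset[OF F[OF r(1)]]) (auto simp: ball_sets_lebesgue sets.Diff)
    moreover have "(LINT y : ball 0 \<rho> - ball 0 r | lebesgue. (F y + F (- y)) / 2)
        = (LINT y : ball 0 \<rho> - ball 0 r | lebesgue. F y)"
      by (rule set_integral_symmetric_set[OF _ annulus]) auto
    ultimately show ?thesis
      using F[OF \<rho>] by (simp add: set_integral_Un)
  qed
  have "((\<lambda>r. (LINT y : ball 0 \<rho> - ball 0 r | lebesgue. (F y + F (- y)) / 2)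
        + (LINT y : S - ball 0 \<rho> | lebesgue. F y)) \<longlongrightarrow>
      (LINT y : ball 0 \<rho> | lebesgue. (F y + F (- y)) / 2) + (LINT y : S - ball 0 \<rho> | lebesgue. F y)) (at_right 0)"
    by (intro tendsto_add tendsto_const tendsto_set_integral_annuli[OF \<rho> H])
  moreover have "\<forall>\<^sub>F r in at_right 0. (LINT y : ball 0 \<rho> - ball 0 r | lebesgue. (F y + F (- y)) / 2)
      + (LINT y : S - ball 0 \<rho> | lebesgue. F y) = (LINT y : S - ball 0 r | lebesgue. F y)"
    using split by (intro eventually_at_rightI[OF _ \<rho>]) auto
  ultimately show ?thesis
    by (rule Lim_transform_eventually)
qed

section \<open>The tail majorant\<close>

text \<open>The tail term of the estimate is at most \<open>M\<close> times this function; that its integral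
  vanishes as \<open>\<eta> \<rightarrow> 0\<close> is what fixes \<open>\<eta>\<close>.\<close>
definition tail_majorant :: "real \<Rightarrow> real \<Rightarrow> real \<Rightarrow> 'a::euclidean_space \<Rightarrow> real" where
  "tail_majorant p \<gamma> \<eta> y = (norm (8 *\<^sub>R y) powr \<eta> - 1) powr (p - 1) * norm y powr (- real DIM('a) - \<gamma>)"

lemma borel_measurable_tail_majorant [measurable]:
  "tail_majorant p \<gamma> \<eta> \<in> borel_measurable (borel :: 'a::euclidean_space measure)"
  unfolding tail_majorant_def[abs_def] by measurable

lemma set_integral_tail_majorant_nonneg:
  "0 \<le> (LINT y : A | lebesgue. tail_majorant p \<gamma> \<eta> (y::'a::euclidean_space))"
  unfolding set_lebesgue_integral_def tail_majorant_def
  by (intro Bochner_Integration.integral_nonneg) (simp add: indicator_def)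

lemma tail_factor_bounds:
  fixes y :: "'a::euclidean_space"
  assumes "1/4 \<le> norm y" "0 \<le> \<eta>"
  shows "0 \<le> norm (8 *\<^sub>R y) powr \<eta> - 1" and "1 \<le> norm (8 *\<^sub>R y)"
proof -
  show n: "1 \<le> norm (8 *\<^sub>R y)"
    using assms by simp
  have "1 powr \<eta> \<le> norm (8 *\<^sub>R y) powr \<eta>"
    using n assms by (intro powr_mono2) auto
  then show "0 \<le> norm (8 *\<^sub>R y) powr \<eta> - 1" by simp
qed

lemma tail_majorant_le:
  fixes y :: "'a::euclidean_space"
  assumes y: "1/4 \<le> norm y" and p: "1 < p" and \<eta>: "0 \<le> \<eta>" "\<eta> * (p - 1) \<le> \<gamma> / 2"
  shows "\<bar>tail_majorant p \<gamma> \<eta> y\<bar> \<le> 8 powr (\<gamma>/2) * norm y powr (- real DIM('a) - \<gamma>/2)"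
proof -
  note bounds = tail_factor_bounds[OF y \<eta>(1)]
  have "(norm (8 *\<^sub>R y) powr \<eta> - 1) powr (p - 1) \<le> (norm (8 *\<^sub>R y) powr \<eta>) powr (p - 1)"
    using bounds p by (intro powr_mono2) auto
  also have "\<dots> = norm (8 *\<^sub>R y) powr (\<eta> * (p - 1))"
    by (simp add: powr_powr)
  also have "\<dots> \<le> norm (8 *\<^sub>R y) powr (\<gamma>/2)"
    using bounds \<eta> by (intro powr_mono) auto
  also have "\<dots> = 8 powr (\<gamma>/2) * norm y powr (\<gamma>/2)"
    by (simp add: powr_mult)
  finally have "\<bar>tail_majorant p \<gamma> \<eta> y\<bar> \<le> 8 powr (\<gamma>/2) * norm y powr (\<gamma>/2) * norm y powr (- real DIM('a) - \<gamma>)"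
    by (simp add: tail_majorant_def mult_right_mono)
  also have "\<dots> = 8 powr (\<gamma>/2) * norm y powr (\<gamma>/2 + (- real DIM('a) - \<gamma>))"
    by (simp only: mult.assoc powr_add)
  also have "\<gamma>/2 + (- real DIM('a) - \<gamma>) = - real DIM('a) - \<gamma>/2"
    by simp
  finally show ?thesis .
qed

lemma set_integrable_tail_majorant:
  assumes p: "1 < p" and \<gamma>: "0 < \<gamma>" and \<eta>: "0 \<le> \<eta>" "\<eta> * (p - 1) \<le> \<gamma> / 2"
  shows "set_integrable lebesgue (UNIV - ball (0::'a::euclidean_space) (1/4)) (tail_majorant p \<gamma> \<eta>)"
proof (rule set_integrable_integral_le(1))
  show "set_integrable lebesgue (UNIV - ball (0::'a) (1/4)) (\<lambda>y. 8 powr (\<gamma>/2) * norm y powr (- real DIM('a) - \<gamma>/2))"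
    using set_integrable_norm_powr_outside_ball[of "1/4" "DIM('a) + \<gamma>/2", where 'a='a] \<gamma> by simp
  show "set_borel_measurable lebesgue (UNIV - ball (0::'a) (1/4)) (tail_majorant p \<gamma> \<eta>)"
    unfolding set_borel_measurable_def by (intro borel_measurable_lebesgueI) measurable
qed (use tail_majorant_le[OF _ assms(1,3,4), where 'a='a] in auto)

lemma tendsto_set_integral_tail_majorant:
  assumes p: "1 < p" and \<gamma>: "0 < \<gamma>"
  shows "((\<lambda>\<eta>. LINT y : UNIV - ball (0::'a::euclidean_space) (1/4) | lebesgue. tail_majorant p \<gamma> \<eta> y)
           \<longlongrightarrow> 0) (at_right 0)"
proof (rule tendsto_at_right_sequentially)
  show "0 < \<gamma> / (2 * (p - 1))" using p \<gamma> by simp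
  fix S :: "nat \<Rightarrow> real"
  assume S: "\<And>n. 0 < S n" "\<And>n. S n < \<gamma> / (2 * (p - 1))" "S \<longlonglongrightarrow> 0"
  define Out where "Out = UNIV - ball (0::'a) (1/4)"
  have small: "S n * (p - 1) \<le> \<gamma> / 2" for n
    using S(2)[of n] p by (simp add: field_simps)
  have pointwise: "(\<lambda>n. tail_majorant p \<gamma> (S n) y) \<longlonglongrightarrow> 0" if y: "1/4 \<le> norm y" for y :: 'a
  proof -
    have n8: "1 \<le> norm (8 *\<^sub>R y)"
      using tail_factor_bounds(2)[OF y order_refl] .
    have "(\<lambda>n. norm (8 *\<^sub>R y) powr S n - 1) \<longlonglongrightarrow> norm (8 *\<^sub>R y) powr 0 - 1"
      using n8 by (intro tendsto_intros S(3)) auto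
    moreover have "norm (8 *\<^sub>R y) powr 0 - 1 = 0"
      using n8 by (auto simp: powr_zero_eq_one)
    ultimately have "(\<lambda>n. (norm (8 *\<^sub>R y) powr S n - 1) powr (p - 1)) \<longlonglongrightarrow> 0"
      using tail_factor_bounds(1)[OF y less_imp_le[OF S(1)]] p by (intro tendsto_zero_powrI) auto
    then show ?thesis
      by (auto simp: tail_majorant_def intro!: tendsto_mult_left_zero)
  qed
  have "(\<lambda>n. integral\<^sup>L lebesgue (\<lambda>y. indicator Out y *\<^sub>R tail_majorant p \<gamma> (S n) y))
      \<longlonglongrightarrow> integral\<^sup>L lebesgue (\<lambda>y::'a. 0)"
  proof (rule integral_dominated_convergence)
    show "integrable lebesgue (\<lambda>y. indicator Out y *\<^sub>R (8 powr (\<gamma>/2) * norm y powr (- real DIM('a) - \<gamma>/2)))"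
      using set_integrable_norm_powr_outside_ball[of "1/4" "DIM('a) + \<gamma>/2", where 'a='a] \<gamma>
      unfolding Out_def set_integrable_def by (simp add: mult.left_commute[of _ "8 powr (\<gamma>/2)"])
    show "AE y in lebesgue. norm (indicator Out y *\<^sub>R tail_majorant p \<gamma> (S n) y)
        \<le> indicator Out y *\<^sub>R (8 powr (\<gamma>/2) * norm y powr (- real DIM('a) - \<gamma>/2))" for n
      using tail_majorant_le[OF _ p less_imp_le[OF S(1)] small, where 'a='a]
      by (intro AE_I2) (simp add: Out_def indicator_def)
    show "AE y in lebesgue. (\<lambda>n. indicator Out y *\<^sub>R tail_majorant p \<gamma> (S n) y) \<longlonglongrightarrow> (0::real)"
      using pointwise by (intro AE_I2) (simp add: Out_def indicator_def)
  qed (auto intro: borel_measurable_lebesgueI simp: Out_def)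
  then show "(\<lambda>n. LINT y : UNIV - ball (0::'a) (1/4) | lebesgue. tail_majorant p \<gamma> (S n) y) \<longlonglongrightarrow> 0"
    by (simp add: set_lebesgue_integral_def Out_def)
qed

lemma obtain_tail_exponent:
  assumes p: "1 < p" and \<gamma>: "0 < \<gamma>" and e: "0 < e"
  obtains \<eta> where "0 < \<eta>" "\<eta> * (p - 1) \<le> \<gamma> / 2"
    "c * (LINT y : UNIV - ball (0::'a::euclidean_space) (1/4) | lebesgue. tail_majorant p \<gamma> \<eta> y) < e"
proof -
  have "((\<lambda>\<eta>. c * (LINT y : UNIV - ball (0::'a) (1/4) | lebesgue. tail_majorant p \<gamma> \<eta> y)) \<longlongrightarrow> c * 0)
      (at_right 0)"
    by (intro tendsto_mult tendsto_const tendsto_set_integral_tail_majorant p \<gamma>)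
  then have "\<forall>\<^sub>F \<eta> in at_right 0. c * (LINT y : UNIV - ball (0::'a) (1/4) | lebesgue. tail_majorant p \<gamma> \<eta> y) < e"
    using e by (auto dest: order_tendstoD(2))
  moreover have "\<forall>\<^sub>F \<eta> in at_right 0. 0 < \<eta> \<and> \<eta> < \<gamma> / (2 * (p - 1))"
    using p \<gamma> by (intro eventually_at_rightI[of 0 "\<gamma> / (2 * (p - 1))"]) auto
  ultimately obtain \<eta> where "0 < \<eta>" "\<eta> < \<gamma> / (2 * (p - 1))"
    "c * (LINT y : UNIV - ball (0::'a) (1/4) | lebesgue. tail_majorant p \<gamma> \<eta> y) < e"
    using eventually_happens'[OF trivial_limit_at_right_real] by (metis (mono_tags, lifting) eventually_conj)
  then show ?thesis
    using p by (intro that) (auto simp: field_simps)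
qed

text \<open>A bound, uniform over the kernel class, for the principal value (\<open>p > 2\<close>), for the integral of
  \<open>|\<beta>(x) - \<beta>(x+y)|^(p-1) K(x,y)\<close> (\<open>p < 2\<close>) and for the mass of \<open>K(x,\<cdot>)\<close> outside \<open>B_1/4\<close>.
  The middle integral is finite only when \<open>p(1-s) > 1\<close>; otherwise it is the junk value \<open>0\<close>, which is
  harmless since it is only used for \<open>p < 2\<close>.\<close>
definition kernel_class_constant :: "'a::euclidean_space itself \<Rightarrow> real \<Rightarrow> real \<Rightarrow> real \<Rightarrow> real \<Rightarrow> real \<Rightarrow> real"
  where "kernel_class_constant _ s p Lam M \<gamma> =
    7 * (p - 1) * 8 powr (p - 2) * Lam *
      (LINT y : ball (0::'a) (1/4) | lebesgue. norm y powr (- max 0 (real DIM('a) + s * p - p)))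
    + 8 powr (p - 1) * Lam * (LINT y : ball (0::'a) (1/4) | lebesgue. norm y powr (- (real DIM('a) + s * p - (p - 1))))
    + M * (LINT y : UNIV - ball (0::'a) (1/4) | lebesgue. norm y powr (- real DIM('a) - \<gamma>))"

lemma ereal_less_times_enn2ereal:
  fixes I :: ennreal and L c d :: real
  assumes "L < c * d" "0 < c" "0 \<le> d" "ennreal d \<le> I"
  shows "ereal L < ereal c * enn2ereal I"
proof -
  have "ereal d \<le> enn2ereal I"
    using assms(3,4) by (metis enn2ereal_ennreal less_eq_ennreal.rep_eq)
  then have "ereal c * ereal d \<le> ereal c * enn2ereal I"
    using assms(2) by (intro ereal_mult_left_mono) auto
  moreover have "ereal L < ereal c * ereal d"
    using assms(1) by simp
  ultimately show ?thesis
    by order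
qed

lemma kernel_class_constant_nonneg:
  assumes "1 \<le> p" "0 \<le> Lam" "0 \<le> M"
  shows "0 \<le> kernel_class_constant TYPE('a::euclidean_space) s p Lam M \<gamma>"
  using assms by (simp add: kernel_class_constant_def set_integral_norm_powr_nonneg)

text \<open>\<open>Kx\<close> is \<open>K(x,\<cdot>)\<close> for a fixed \<open>x \<in> B_2\<close>.\<close>
locale kernel_section =
  fixes Kx :: "'a::euclidean_space \<Rightarrow> real" and s p lam Lam M \<gamma> :: real
  assumes borel_measurable_kernel [measurable]: "Kx \<in> borel_measurable borel"
    and kernel_nonneg: "\<And>y. 0 \<le> Kx y"
    and kernel_symmetric: "\<And>y. Kx (- y) = Kx y"
    and kernel_lower: "\<And>y. y \<noteq> 0 \<Longrightarrow> norm y < 2 \<Longrightarrow> lam * norm y powr (- real DIM('a) - s * p) \<le> Kx y"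
    and kernel_upper: "\<And>y. y \<noteq> 0 \<Longrightarrow> norm y < 2 \<Longrightarrow> Kx y \<le> Lam * norm y powr (- real DIM('a) - s * p)"
    and kernel_far: "\<And>y. 1/4 \<le> norm y \<Longrightarrow> Kx y \<le> M * norm y powr (- real DIM('a) - \<gamma>)"
    and parameters: "0 < s" "s < 1" "1 < p" "0 < lam" "lam \<le> Lam" "0 < M" "0 < \<gamma>"
begin

lemma kernel_exponent_nonpos: "- real DIM('a) - s * p \<le> 0"
  using parameters mult_pos_pos[of s p] by linarith

lemma far_kernel:
  shows "set_integrable lebesgue (UNIV - ball 0 (1/4)) Kx"
    and "(LINT y : UNIV - ball 0 (1/4) | lebesgue. Kx y)
      \<le> M * (LINT y : UNIV - ball (0::'a) (1/4) | lebesgue. norm y powr (- real DIM('a) - \<gamma>))"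
proof -
  have g: "set_integrable lebesgue (UNIV - ball (0::'a) (1/4)) (\<lambda>y. M * norm y powr (- real DIM('a) - \<gamma>))"
    using set_integrable_norm_powr_outside_ball[of "1/4" "DIM('a) + \<gamma>", where 'a='a] parameters by simp
  have f: "set_borel_measurable lebesgue (UNIV - ball 0 (1/4)) Kx"
    unfolding set_borel_measurable_def by (intro borel_measurable_lebesgueI) measurable
  have le: "\<bar>Kx y\<bar> \<le> M * norm y powr (- real DIM('a) - \<gamma>)" if "y \<in> UNIV - ball 0 (1/4)" for y
    using that kernel_far[of y] kernel_nonneg[of y] by simp
  show "set_integrable lebesgue (UNIV - ball 0 (1/4)) Kx"
    by (rule set_integrable_integral_le(1)[OF g f le])
  show "(LINT y : UNIV - ball 0 (1/4) | lebesgue. Kx y)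
      \<le> M * (LINT y : UNIV - ball (0::'a) (1/4) | lebesgue. norm y powr (- real DIM('a) - \<gamma>))"
    using set_integrable_integral_le(2)[OF g f le] by simp
qed

lemma le_kernel_class_constant:
  defines "C \<equiv> kernel_class_constant TYPE('a) s p Lam M \<gamma>"
    and "K\<^sub>f \<equiv> LINT y : UNIV - ball 0 (1/4) | lebesgue. Kx y"
  shows "K\<^sub>f \<le> C"
    and "7 * (p - 1) * 8 powr (p - 2) * Lam *
        (LINT y : ball (0::'a) (1/4) | lebesgue. norm y powr (- max 0 (real DIM('a) + s * p - p))) + K\<^sub>f \<le> C"
    and "8 powr (p - 1) * Lam *
        (LINT y : ball (0::'a) (1/4) | lebesgue. norm y powr (- (real DIM('a) + s * p - (p - 1)))) + K\<^sub>f \<le> C"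
proof -
  have "0 \<le> 7 * (p - 1) * 8 powr (p - 2) * Lam *
      (LINT y : ball (0::'a) (1/4) | lebesgue. norm y powr (- max 0 (real DIM('a) + s * p - p)))"
    "0 \<le> 8 powr (p - 1) * Lam *
      (LINT y : ball (0::'a) (1/4) | lebesgue. norm y powr (- (real DIM('a) + s * p - (p - 1))))"
    using parameters by (simp_all add: set_integral_norm_powr_nonneg)
  then show "K\<^sub>f \<le> C" "7 * (p - 1) * 8 powr (p - 2) * Lam *
        (LINT y : ball (0::'a) (1/4) | lebesgue. norm y powr (- max 0 (real DIM('a) + s * p - p))) + K\<^sub>f \<le> C"
    "8 powr (p - 1) * Lam *
        (LINT y : ball (0::'a) (1/4) | lebesgue. norm y powr (- (real DIM('a) + s * p - (p - 1)))) + K\<^sub>f \<le> C"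
    using far_kernel(2) unfolding C_def K\<^sub>f_def kernel_class_constant_def by linarith+
qed

lemma tail_term:
  assumes \<eta>: "0 \<le> \<eta>" "\<eta> * (p - 1) \<le> \<gamma> / 2"
  defines "T \<equiv> \<lambda>y. (norm (8 *\<^sub>R y) powr \<eta> - 1) powr (p - 1) * Kx y"
  shows "set_integrable lebesgue (UNIV - ball 0 (1/4)) T"
    and "(LINT y : UNIV - ball 0 (1/4) | lebesgue. T y)
      \<le> M * (LINT y : UNIV - ball (0::'a) (1/4) | lebesgue. tail_majorant p \<gamma> \<eta> y)"
proof -
  have g: "set_integrable lebesgue (UNIV - ball (0::'a) (1/4)) (\<lambda>y. M * tail_majorant p \<gamma> \<eta> y)"
    using set_integrable_tail_majorant[OF parameters(3,7) \<eta>] by (rule set_integrable_mult_right)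
  have f: "set_borel_measurable lebesgue (UNIV - ball 0 (1/4)) T"
    unfolding set_borel_measurable_def T_def by (intro borel_measurable_lebesgueI) measurable
  have le: "\<bar>T y\<bar> \<le> M * tail_majorant p \<gamma> \<eta> y" if "y \<in> UNIV - ball 0 (1/4)" for y
  proof -
    have "0 \<le> (norm (8 *\<^sub>R y) powr \<eta> - 1) powr (p - 1)"
      by simp
    then have "T y \<le> (norm (8 *\<^sub>R y) powr \<eta> - 1) powr (p - 1) * (M * norm y powr (- real DIM('a) - \<gamma>))"
      unfolding T_def using that by (intro mult_left_mono kernel_far) auto
    then show ?thesis
      using kernel_nonneg[of y] by (simp add: T_def tail_majorant_def mult_ac)
  qed
  show "set_integrable lebesgue (UNIV - ball 0 (1/4)) T"
    by (rule set_integrable_integral_le(1)[OF g f le])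
  show "(LINT y : UNIV - ball 0 (1/4) | lebesgue. T y)
      \<le> M * (LINT y : UNIV - ball (0::'a) (1/4) | lebesgue. tail_majorant p \<gamma> \<eta> y)"
    using set_integrable_integral_le(2)[OF g f le] by simp
qed

lemma shifted_tail_integrand_le:
  assumes y: "1/4 \<le> norm y" and \<eta>: "0 \<le> \<eta>" and k: "0 \<le> k"
  shows "\<bar>k * beta x + 2 * (norm (8 *\<^sub>R y) powr \<eta> - 1)\<bar> powr (p - 1) * Kx y
    \<le> 2 powr (p - 1) * k powr (p - 1) * Kx y + 4 powr (p - 1) * M * tail_majorant p \<gamma> \<eta> y"
proof -
  define g where "g = (norm (8 *\<^sub>R y) powr \<eta> - 1) powr (p - 1)"
  have "k * beta x \<le> k"
    using k beta_le_one[of x] by (simp add: mult_left_le)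
  then have "\<bar>k * beta x + 2 * (norm (8 *\<^sub>R y) powr \<eta> - 1)\<bar> powr (p - 1) \<le> 2 powr (p - 1) * k powr (p - 1) + 4 powr (p - 1) * g"
    unfolding g_def using k beta_nonneg[of x] tail_factor_bounds(1)[OF y \<eta>] parameters
    by (intro powr_abs_add_le) auto
  then have "\<bar>k * beta x + 2 * (norm (8 *\<^sub>R y) powr \<eta> - 1)\<bar> powr (p - 1) * Kx y
      \<le> (2 powr (p - 1) * k powr (p - 1) + 4 powr (p - 1) * g) * Kx y"
    using kernel_nonneg by (intro mult_right_mono) auto
  also have "\<dots> = 2 powr (p - 1) * k powr (p - 1) * Kx y + 4 powr (p - 1) * g * Kx y"
    by (simp only: distrib_right)
  also have "4 powr (p - 1) * g * Kx y \<le> 4 powr (p - 1) * g * (M * norm y powr (- real DIM('a) - \<gamma>))"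
    using kernel_far[OF y] by (intro mult_left_mono) (auto simp: g_def)
  also have "\<dots> = 4 powr (p - 1) * M * tail_majorant p \<gamma> \<eta> y"
    by (simp add: g_def tail_majorant_def mult_ac)
  finally show ?thesis
    by simp
qed

lemma shifted_tail_term:
  fixes x :: 'a
  assumes \<eta>: "0 \<le> \<eta>" "\<eta> * (p - 1) \<le> \<gamma> / 2" and k: "0 \<le> k"
  defines "S \<equiv> \<lambda>y. \<bar>k * beta x + 2 * (norm (8 *\<^sub>R y) powr \<eta> - 1)\<bar> powr (p - 1) * Kx y"
  shows "set_integrable lebesgue (UNIV - ball 0 (1/4)) S"
    and "(LINT y : UNIV - ball 0 (1/4) | lebesgue. S y)
      \<le> 2 powr (p - 1) * k powr (p - 1) * (LINT y : UNIV - ball 0 (1/4) | lebesgue. Kx y)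
        + 4 powr (p - 1) * M * (LINT y : UNIV - ball (0::'a) (1/4) | lebesgue. tail_majorant p \<gamma> \<eta> y)"
proof -
  define g where "g y = 2 powr (p - 1) * k powr (p - 1) * Kx y + 4 powr (p - 1) * M * tail_majorant p \<gamma> \<eta> y"
    for y
  have gi: "set_integrable lebesgue (UNIV - ball (0::'a) (1/4)) g"
    unfolding g_def using far_kernel(1) set_integrable_tail_majorant[OF parameters(3,7) \<eta>]
    by (intro set_integral_add set_integrable_mult_right)
  have f: "set_borel_measurable lebesgue (UNIV - ball 0 (1/4)) S"
    unfolding set_borel_measurable_def S_def by (intro borel_measurable_lebesgueI) measurable
  have le: "\<bar>S y\<bar> \<le> g y" if "y \<in> UNIV - ball 0 (1/4)" for y
    using shifted_tail_integrand_le[of y \<eta> k x] that \<eta> k kernel_nonneg[of y] by (simp add: S_def g_def)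
  show "set_integrable lebesgue (UNIV - ball 0 (1/4)) S"
    by (rule set_integrable_integral_le(1)[OF gi f le])
  have "(LINT y : UNIV - ball 0 (1/4) | lebesgue. g y)
    = 2 powr (p - 1) * k powr (p - 1) * (LINT y : UNIV - ball 0 (1/4) | lebesgue. Kx y)
      + 4 powr (p - 1) * M * (LINT y : UNIV - ball (0::'a) (1/4) | lebesgue. tail_majorant p \<gamma> \<eta> y)"
    unfolding g_def using far_kernel(1) set_integrable_tail_majorant[OF parameters(3,7) \<eta>]
    by (subst set_integral_add(2)) (auto intro!: set_integrable_mult_right)
  then show "(LINT y : UNIV - ball 0 (1/4) | lebesgue. S y)
      \<le> 2 powr (p - 1) * k powr (p - 1) * (LINT y : UNIV - ball 0 (1/4) | lebesgue. Kx y)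
        + 4 powr (p - 1) * M * (LINT y : UNIV - ball (0::'a) (1/4) | lebesgue. tail_majorant p \<gamma> \<eta> y)"
    using set_integrable_integral_le(2)[OF gi f le] by simp
qed

lemma near_field_integrand_le:
  assumes x: "norm x < 1"
  shows "\<bar>beta x - beta (x + y)\<bar> powr (p - 1) * Kx y
    \<le> 8 powr (p - 1) * Lam * (indicator (ball 0 (1/4)) y * norm y powr (- (real DIM('a) + s * p - (p - 1))))
      + indicator (UNIV - ball 0 (1/4)) y * Kx y"
proof -
  consider "y = 0" | "y \<noteq> 0" "norm y < 1/4" | "1/4 \<le> norm y" by linarith
  then show ?thesis
  proof cases
    case 1
    then show ?thesis using parameters by simp
  next
    case 2
    have "\<bar>beta x - beta (x + y)\<bar> powr (p - 1) \<le> (8 * norm y) powr (p - 1)"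
      using abs_beta_diff_le[of x y] x 2 parameters by (intro powr_mono2) auto
    moreover have "Kx y \<le> Lam * norm y powr (- real DIM('a) - s * p)"
      using kernel_upper[of y] 2 by simp
    ultimately have "\<bar>beta x - beta (x + y)\<bar> powr (p - 1) * Kx y
        \<le> (8 * norm y) powr (p - 1) * (Lam * norm y powr (- real DIM('a) - s * p))"
      using kernel_nonneg[of y] by (simp add: mult_mono)
    also have "\<dots> = 8 powr (p - 1) * Lam * norm y powr (- (real DIM('a) + s * p - (p - 1)))"
      by (simp add: powr_mult mult_ac flip: powr_add) (simp add: algebra_simps)
    finally show ?thesis using 2 by simp
  next
    case 3
    have "\<bar>beta x - beta (x + y)\<bar> powr (p - 1) \<le> 1"
      using powr_mono2[of "p - 1" "\<bar>beta x - beta (x + y)\<bar>" 1] abs_beta_diff_le_one[of x "x + y"] parameters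
      by simp
    then show ?thesis
      using 3 kernel_nonneg[of y] by (simp add: mult_left_le_one_le)
  qed
qed

lemma near_field_integral:
  fixes x :: 'a
  assumes x: "norm x < 1" and p2: "p < 2" and p_large: "1 < p * (1 - s)"
  defines "G \<equiv> \<lambda>y. \<bar>beta x - beta (x + y)\<bar> powr (p - 1) * Kx y"
  shows "integrable lebesgue G" and "integral\<^sup>L lebesgue G \<le> kernel_class_constant TYPE('a) s p Lam M \<gamma>"
proof -
  define b where "b = real DIM('a) + s * p - (p - 1)"
  define D where "D y = 8 powr (p - 1) * Lam * (indicator (ball 0 (1/4)) y * norm y powr (- b))
    + indicator (UNIV - ball 0 (1/4)) y * Kx y" for y :: 'a
  have "1 \<le> real DIM('a)" "0 \<le> s * p"
    using DIM_positive[where 'a='a] parameters by (simp_all add: Suc_le_eq)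
  moreover have "p * (1 - s) = p - s * p"
    by (simp add: algebra_simps)
  ultimately have b: "0 \<le> b" "b < DIM('a)"
    using p2 p_large unfolding b_def by linarith+
  have D: "integrable lebesgue D"
    using set_integrable_norm_powr_ball[of "1/4" b, OF _ b] far_kernel(1)
    unfolding D_def set_integrable_def by (intro Bochner_Integration.integrable_add integrable_mult_right) simp_all
  have le: "\<bar>G y\<bar> \<le> D y" for y
    using near_field_integrand_le[OF x, of y] kernel_nonneg[of y] by (simp add: G_def D_def b_def)
  have G: "G \<in> borel_measurable lebesgue"
    unfolding G_def by (intro borel_measurable_lebesgueI) measurable
  show "integrable lebesgue G"
    using le by (intro Bochner_Integration.integrable_bound[OF D G] AE_I2) (simp add: order_trans[OF _ abs_ge_self])
  then have "integral\<^sup>L lebesgue G \<le> integral\<^sup>L lebesgue D"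
    using le D by (intro integral_mono) (auto simp: abs_le_iff)
  also have "\<dots> = 8 powr (p - 1) * Lam * (LINT y : ball (0::'a) (1/4) | lebesgue. norm y powr (- b))
      + (LINT y : UNIV - ball 0 (1/4) | lebesgue. Kx y)"
    using set_integrable_norm_powr_ball[of "1/4" b, OF _ b] far_kernel(1)
    unfolding D_def set_integrable_def set_lebesgue_integral_def by simp
  also have "\<dots> \<le> kernel_class_constant TYPE('a) s p Lam M \<gamma>"
    using le_kernel_class_constant(3) by (simp add: b_def)
  finally show "integral\<^sup>L lebesgue G \<le> kernel_class_constant TYPE('a) s p Lam M \<gamma>" .
qed

definition pv_integrand :: "'a \<Rightarrow> 'a \<Rightarrow> real" where
  "pv_integrand x y = \<bar>beta x - beta (x + y)\<bar> powr (p - 2) * (beta x - beta (x + y)) * Kx y"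

lemma borel_measurable_pv_integrand: "pv_integrand x \<in> borel_measurable lebesgue"
  unfolding pv_integrand_def[abs_def] by (intro borel_measurable_lebesgueI) measurable

lemma abs_pv_integrand_le:
  assumes "2 < p"
  shows "\<bar>pv_integrand x y\<bar> \<le> Kx y"
proof -
  have "\<bar>beta x - beta (x + y)\<bar> powr (p - 2) * \<bar>beta x - beta (x + y)\<bar> \<le> 1"
    using powr_mono2[of "p - 2" "\<bar>beta x - beta (x + y)\<bar>" 1] abs_beta_diff_le_one[of x "x + y"] assms
    by (simp add: mult_le_one)
  then show ?thesis
    using kernel_nonneg[of y] by (simp add: pv_integrand_def abs_mult mult_left_le_one_le)
qed

lemma set_integrable_truncated_pv_integrand:
  assumes x: "norm x < 3/4" and p2: "2 < p" and r: "0 < r"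
  shows "set_integrable lebesgue ({y. x + y \<in> ball 0 1} - ball 0 r) (pv_integrand x)"
proof -
  define S where "S = {y. x + y \<in> ball 0 1}"
  have S_eq: "S = ball (- x) 1"
    by (auto simp: S_def dist_norm norm_minus_commute add.commute)
  have S_sub: "S \<subseteq> ball 0 2"
  proof
    fix y assume "y \<in> S"
    then show "y \<in> ball 0 2"
      using x norm_triangle_ineq4[of "x + y" x] by (simp add: S_def)
  qed
  have "set_integrable lebesgue (S - ball 0 r) (pv_integrand x)"
  proof (rule set_integrable_integral_le(1))
    have "integrable lebesgue (\<lambda>y. indicator (ball (0::'a) 2) y *\<^sub>R (Lam * r powr (- real DIM('a) - s * p)))"
      using lmeasurable_ball[of "0::'a" 2] by (intro integrable_scaleR_left integrable_real_indicator)
        (auto simp: fmeasurable_def)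
    then show "set_integrable lebesgue (S - ball 0 r) (\<lambda>_. Lam * r powr (- real DIM('a) - s * p))"
      unfolding set_integrable_def[symmetric]
      by (rule set_integrable_subset) (use S_sub in \<open>auto simp: S_eq ball_sets_lebesgue\<close>)
    show "set_borel_measurable lebesgue (S - ball 0 r) (pv_integrand x)"
      unfolding set_borel_measurable_def
      by (intro borel_measurable_scaleR borel_measurable_indicator borel_measurable_pv_integrand)
        (simp add: S_eq ball_sets_lebesgue sets.Diff)
    show "\<bar>pv_integrand x y\<bar> \<le> Lam * r powr (- real DIM('a) - s * p)" if "y \<in> S - ball 0 r" for y
    proof -
      have y: "y \<noteq> 0" "r \<le> norm y" "norm y < 2"
        using that r S_sub by auto
      have "\<bar>pv_integrand x y\<bar> \<le> Lam * norm y powr (- real DIM('a) - s * p)"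
        using abs_pv_integrand_le[OF p2, of x y] kernel_upper[OF y(1,3)] by linarith
      also have "\<dots> \<le> Lam * r powr (- real DIM('a) - s * p)"
        using y r parameters kernel_exponent_nonpos by (intro mult_left_mono powr_mono2') auto
      finally show ?thesis .
    qed
  qed
  then show ?thesis
    by (simp add: S_def)
qed

lemma even_part_pv_integrand_le:
  assumes x: "norm x < 3/4" and p2: "2 < p" and y: "norm y < 1/4"
  shows "\<bar>(pv_integrand x y + pv_integrand x (- y)) / 2\<bar>
    \<le> 7 * (p - 1) * 8 powr (p - 2) * Lam * norm y powr (- max 0 (real DIM('a) + s * p - p))"
proof (cases "y = 0")
  case False
  define c where "c = 14 * (p - 1) * 8 powr (p - 2)"
  define u w where "u = beta x - beta (x + y)" and "w = beta x - beta (x - y)"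
  have "\<bar>\<bar>u\<bar> powr (p - 2) * u + \<bar>w\<bar> powr (p - 2) * w\<bar> \<le> c * norm y powr p"
    using beta_signed_powr_second_difference[of x y "p - 2"] x y p2 by (simp add: u_def w_def c_def)
  moreover have "pv_integrand x y + pv_integrand x (- y) = (\<bar>u\<bar> powr (p - 2) * u + \<bar>w\<bar> powr (p - 2) * w) * Kx y"
    by (simp add: pv_integrand_def u_def w_def kernel_symmetric algebra_simps)
  ultimately have "\<bar>pv_integrand x y + pv_integrand x (- y)\<bar> \<le> c * norm y powr p * Kx y"
    using kernel_nonneg[of y] by (simp add: abs_mult mult_right_mono)
  also have "\<dots> \<le> c * norm y powr p * (Lam * norm y powr (- real DIM('a) - s * p))"
    using kernel_upper[of y] False y p2 by (intro mult_left_mono) (auto simp: c_def)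
  also have "\<dots> = c * Lam * (norm y powr p * norm y powr (- real DIM('a) - s * p))"
    by (simp add: mult_ac)
  also have "norm y powr p * norm y powr (- real DIM('a) - s * p) = norm y powr (- (real DIM('a) + s * p - p))"
    by (simp only: powr_add[symmetric]) (simp add: algebra_simps)
  also have "c * Lam * norm y powr (- (real DIM('a) + s * p - p))
      \<le> c * Lam * norm y powr (- max 0 (real DIM('a) + s * p - p))"
    using y p2 parameters by (intro mult_left_mono powr_mono') (auto simp: c_def)
  also have "\<dots> = 2 * (7 * (p - 1) * 8 powr (p - 2) * Lam * norm y powr (- max 0 (real DIM('a) + s * p - p)))"
    by (simp add: c_def)
  finally show ?thesis
    by simp
qed (simp add: pv_integrand_def)

lemma principal_value:
  fixes x :: 'a
  assumes x: "norm x < 3/4" and p2: "2 < p"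
  shows "\<exists>PV. (\<forall>r>0. set_integrable lebesgue ({y. x + y \<in> ball 0 1} - ball 0 r) (pv_integrand x))
    \<and> ((\<lambda>r. LINT y : {y. x + y \<in> ball 0 1} - ball 0 r | lebesgue. pv_integrand x y) \<longlongrightarrow> PV) (at_right 0)
    \<and> PV \<le> kernel_class_constant TYPE('a) s p Lam M \<gamma>"
proof -
  define S where "S = {y. x + y \<in> ball 0 1}"
  define H where "H y = (pv_integrand x y + pv_integrand x (- y)) / 2" for y
  define g where "g y = 7 * (p - 1) * 8 powr (p - 2) * Lam * norm y powr (- max 0 (real DIM('a) + s * p - p))"
    for y :: 'a
  note truncated = set_integrable_truncated_pv_integrand[OF x p2, folded S_def]
  have S_sub: "ball 0 (1/4) \<subseteq> S" "S \<in> sets lebesgue"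
  proof
    fix y :: 'a assume "y \<in> ball 0 (1/4)"
    then show "y \<in> S"
      using x norm_triangle_ineq[of x y] by (simp add: S_def)
  next
    have "S = ball (- x) 1"
      by (auto simp: S_def dist_norm norm_minus_commute add.commute)
    then show "S \<in> sets lebesgue"
      by (simp add: ball_sets_lebesgue)
  qed
  have majorant: "set_integrable lebesgue (ball 0 (1/4)) g"
    using set_integrable_norm_powr_ball[of "1/4" "max 0 (real DIM('a) + s * p - p)", where 'a='a] parameters
    unfolding g_def by (intro set_integrable_mult_right) auto
  have H_meas: "set_borel_measurable lebesgue (ball 0 (1/4)) H"
    unfolding set_borel_measurable_def H_def pv_integrand_def by (intro borel_measurable_lebesgueI) measurable
  have H_le: "\<bar>H y\<bar> \<le> g y" if "y \<in> ball 0 (1/4)" for y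
    using even_part_pv_integrand_le[OF x p2] that by (simp add: H_def g_def)
  note H_int = set_integrable_integral_le[OF majorant H_meas H_le]
  define PV where "PV = (LINT y : ball 0 (1/4) | lebesgue. H y) + (LINT y : S - ball 0 (1/4) | lebesgue. pv_integrand x y)"
  have "((\<lambda>r. LINT y : S - ball 0 r | lebesgue. pv_integrand x y) \<longlongrightarrow> PV) (at_right 0)"
    using S_sub H_int(1) truncated unfolding PV_def H_def by (intro principal_value_by_symmetrization) auto
  moreover have "(LINT y : S - ball 0 (1/4) | lebesgue. pv_integrand x y) \<le> (LINT y : UNIV - ball 0 (1/4) | lebesgue. Kx y)"
    using truncated[of "1/4"] far_kernel(1) abs_pv_integrand_le[OF p2] kernel_nonneg
    unfolding set_lebesgue_integral_def set_integrable_def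
    by (intro integral_mono) (auto simp: indicator_def abs_le_iff)
  then have "PV \<le> kernel_class_constant TYPE('a) s p Lam M \<gamma>"
    using H_int(2) le_kernel_class_constant(2) unfolding PV_def g_def by simp
  ultimately show ?thesis
    using truncated unfolding S_def by blast
qed

lemma kernel_mass_lower_bound:
  assumes "0 \<le> \<delta>"
  shows "ennreal (lam * 2 powr (- real DIM('a) - s * p) * \<delta>) \<le>
    (INF A \<in> {A. A \<in> sets lebesgue \<and> A \<subseteq> ball (0::'a) 2 \<and> emeasure lebesgue A > ennreal \<delta>}.
       \<integral>\<^sup>+ y\<in>A. ennreal (Kx y) \<partial>lebesgue)"
proof (rule INF_greatest)
  fix A assume "A \<in> {A. A \<in> sets lebesgue \<and> A \<subseteq> ball (0::'a) 2 \<and> emeasure lebesgue A > ennreal \<delta>}"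
  then have A: "A \<in> sets lebesgue" "A \<subseteq> ball 0 2" "ennreal \<delta> < emeasure lebesgue A"
    by auto
  define c where "c = lam * 2 powr (- real DIM('a) - s * p)"
  have c: "0 < c"
    using parameters by (simp add: c_def)
  have "ennreal c * indicator A y \<le> ennreal (Kx y) * indicator A y" if "y \<noteq> 0" for y
  proof (cases "y \<in> A")
    case True
    then have y: "norm y < 2" using A(2) by auto
    have "c \<le> lam * norm y powr (- real DIM('a) - s * p)"
      unfolding c_def using y that parameters kernel_exponent_nonpos
      by (intro mult_left_mono powr_mono2') auto
    also have "\<dots> \<le> Kx y"
      by (rule kernel_lower[OF that y])
    finally show ?thesis
      using True by (simp add: ennreal_leI)
  qed simp
  then have "(\<integral>\<^sup>+ y. ennreal c * indicator A y \<partial>lebesgue) \<le> (\<integral>\<^sup>+ y\<in>A. ennreal (Kx y) \<partial>lebesgue)"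
    using AE_completion[OF AE_lborel_singleton[of 0]] by (intro nn_integral_mono_AE) (auto elim!: AE_mp)
  moreover have "ennreal c * ennreal \<delta> \<le> ennreal c * emeasure lebesgue A"
    using A(3) by (intro mult_left_mono) auto
  ultimately show "ennreal (lam * 2 powr (- real DIM('a) - s * p) * \<delta>) \<le> (\<integral>\<^sup>+ y\<in>A. ennreal (Kx y) \<partial>lebesgue)"
    using c assms by (simp add: nn_integral_cmult_indicator[OF A(1)] ennreal_mult c_def[symmetric])
qed



lemma ereal_less_kernel_mass_INF:
  assumes \<delta>: "0 < \<delta>" and L: "L < 2 powr (1 - p) * (lam * 2 powr (- real DIM('a) - s * p) * \<delta>)"
  shows "ereal L < ereal (2 powr (1 - p)) * enn2ereal
    (INF A \<in> {A. A \<in> sets lebesgue \<and> A \<subseteq> ball (0::'a) 2 \<and> emeasure lebesgue A > ennreal \<delta>}.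
       \<integral>\<^sup>+ y\<in>A. ennreal (Kx y) \<partial>lebesgue)"
  using L kernel_mass_lower_bound[of \<delta>] \<delta> parameters by (intro ereal_less_times_enn2ereal) auto

lemma superquadratic_estimate:
  fixes x :: 'a and k \<eta> \<epsilon> :: real
  defines "C \<equiv> kernel_class_constant TYPE('a) s p Lam M \<gamma>"
    and "J \<equiv> LINT y : UNIV - ball (0::'a) (1/4) | lebesgue. tail_majorant p \<gamma> \<eta> y"
    and "S \<equiv> \<lambda>y. \<bar>k * beta x + 2 * (norm (8 *\<^sub>R y) powr \<eta> - 1)\<bar> powr (p - 1) * Kx y"
    and "T \<equiv> \<lambda>y. (norm (8 *\<^sub>R y) powr \<eta> - 1) powr (p - 1) * Kx y"
  assumes x: "norm x < 3/4" and p2: "2 < p" and k: "0 \<le> k" and \<eta>: "0 \<le> \<eta>" "\<eta> * (p - 1) \<le> \<gamma> / 2"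
    and small: "2 powr (p - 2) * (1 + 2 powr (p - 1)) * C * k powr (p - 1)
      + (2 powr (p - 2) * 4 powr (p - 1) + 2 powr (p - 1)) * M * J < \<epsilon>"
  shows "\<exists>PV. (\<forall>r>0. set_integrable lebesgue ({y. x + y \<in> ball 0 1} - ball 0 r) (pv_integrand x))
    \<and> ((\<lambda>r. LINT y : {y. x + y \<in> ball 0 1} - ball 0 r | lebesgue. pv_integrand x y) \<longlongrightarrow> PV) (at_right 0)
    \<and> set_integrable lebesgue (UNIV - ball 0 (1/4)) S
    \<and> set_integrable lebesgue (UNIV - ball 0 (1/4)) T
    \<and> 2 powr (p - 2) * k powr (p - 1) * PV + 2 powr (p - 2) * (LINT y : UNIV - ball 0 (1/4) | lebesgue. S y)
        + 2 powr (p - 1) * (LINT y : UNIV - ball 0 (1/4) | lebesgue. T y) < \<epsilon>"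
proof -
  obtain PV where PV: "\<forall>r>0. set_integrable lebesgue ({y. x + y \<in> ball 0 1} - ball 0 r) (pv_integrand x)"
    "((\<lambda>r. LINT y : {y. x + y \<in> ball 0 1} - ball 0 r | lebesgue. pv_integrand x y) \<longlongrightarrow> PV) (at_right 0)"
    "PV \<le> C"
    using principal_value[OF x p2] unfolding C_def by blast
  note S_bounds = shifted_tail_term[OF \<eta> k, of x, folded S_def J_def]
  note T_bounds = tail_term[OF \<eta>, folded T_def J_def]
  have PV_le: "2 powr (p - 2) * k powr (p - 1) * PV \<le> 2 powr (p - 2) * k powr (p - 1) * C"
    using PV(3) by (intro mult_left_mono) auto
  have S_le: "(LINT y : UNIV - ball 0 (1/4) | lebesgue. S y)
      \<le> 2 powr (p - 1) * k powr (p - 1) * C + 4 powr (p - 1) * M * J"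
  proof -
    have "2 powr (p - 1) * k powr (p - 1) * (LINT y : UNIV - ball 0 (1/4) | lebesgue. Kx y)
        \<le> 2 powr (p - 1) * k powr (p - 1) * C"
      using le_kernel_class_constant(1) unfolding C_def by (intro mult_left_mono) auto
    then show ?thesis
      using S_bounds(2) by linarith
  qed
  have "2 powr (p - 2) * k powr (p - 1) * PV + 2 powr (p - 2) * (LINT y : UNIV - ball 0 (1/4) | lebesgue. S y)
        + 2 powr (p - 1) * (LINT y : UNIV - ball 0 (1/4) | lebesgue. T y)
      \<le> 2 powr (p - 2) * k powr (p - 1) * C + 2 powr (p - 2) * (2 powr (p - 1) * k powr (p - 1) * C + 4 powr (p - 1) * M * J)
        + 2 powr (p - 1) * (M * J)"
    using add_mono[OF add_mono[OF PV_le mult_left_mono[OF S_le]] mult_left_mono[OF T_bounds(2)]] by simp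
  also have "\<dots> = 2 powr (p - 2) * (1 + 2 powr (p - 1)) * C * k powr (p - 1)
      + (2 powr (p - 2) * 4 powr (p - 1) + 2 powr (p - 1)) * M * J"
    by (simp add: algebra_simps)
  finally show ?thesis
    using PV(1,2) S_bounds(1) T_bounds(1) small by (intro exI[of _ PV]) auto
qed

lemma subquadratic_estimate:
  fixes x :: 'a and k \<eta> \<epsilon> :: real
  defines "C \<equiv> kernel_class_constant TYPE('a) s p Lam M \<gamma>"
    and "J \<equiv> LINT y : UNIV - ball (0::'a) (1/4) | lebesgue. tail_majorant p \<gamma> \<eta> y"
    and "G \<equiv> \<lambda>y. \<bar>beta x - beta (x + y)\<bar> powr (p - 1) * Kx y"
    and "T \<equiv> \<lambda>y. (norm (8 *\<^sub>R y) powr \<eta> - 1) powr (p - 1) * Kx y"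
  assumes x: "norm x < 1" and p2: "p < 2" and p_large: "1 < p * (1 - s)"
    and k: "0 \<le> k" and \<eta>: "0 \<le> \<eta>" "\<eta> * (p - 1) \<le> \<gamma> / 2"
    and small: "(3 powr (p - 1) + 2 powr (p - 1)) * C * k powr (p - 1) + 2 powr (p - 1) * M * J < \<epsilon>"
  shows "integrable lebesgue G \<and> set_integrable lebesgue (UNIV - ball 0 (1/4)) T
    \<and> (3 powr (p - 1) + 2 powr (p - 1)) * k powr (p - 1) * integral\<^sup>L lebesgue G
        + 2 powr (p - 1) * (LINT y : UNIV - ball 0 (1/4) | lebesgue. T y) < \<epsilon>"
proof -
  note G_bounds = near_field_integral[OF x p2 p_large, folded G_def C_def]
  note T_bounds = tail_term[OF \<eta>, folded T_def J_def]
  have "(3 powr (p - 1) + 2 powr (p - 1)) * k powr (p - 1) * integral\<^sup>L lebesgue G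
      + 2 powr (p - 1) * (LINT y : UNIV - ball 0 (1/4) | lebesgue. T y)
    \<le> (3 powr (p - 1) + 2 powr (p - 1)) * k powr (p - 1) * C + 2 powr (p - 1) * (M * J)"
    using add_mono[OF mult_left_mono[OF G_bounds(2)] mult_left_mono[OF T_bounds(2)]] by simp
  then show ?thesis
    using G_bounds(1) T_bounds(1) small by (simp add: algebra_simps)
qed

lemma fractional_estimates:
  fixes x :: 'a and k \<eta> \<delta> :: real
  defines "C \<equiv> kernel_class_constant TYPE('a) s p Lam M \<gamma>"
    and "J \<equiv> LINT y : UNIV - ball (0::'a) (1/4) | lebesgue. tail_majorant p \<gamma> \<eta> y"
    and "\<epsilon> \<equiv> 2 powr (1 - p) * (lam * 2 powr (- real DIM('a) - s * p) * \<delta>)"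
  assumes x: "norm x < 3/4" and k: "0 \<le> k" and \<eta>: "0 \<le> \<eta>" "\<eta> * (p - 1) \<le> \<gamma> / 2"
    and p_small: "p < 2 \<Longrightarrow> p > 1 / (1 - s)" and \<delta>: "0 < \<delta>"
    and small_k: "(2 powr (p - 2) * (1 + 2 powr (p - 1)) + 3 powr (p - 1) + 2 powr (p - 1)) * C * k powr (p - 1)
      < \<epsilon> / 2"
    and small_\<eta>: "(2 powr (p - 2) * 4 powr (p - 1) + 2 powr (p - 1)) * M * J < \<epsilon> / 2"
  shows "let RHS = ereal (2 powr (1 - p)) * enn2ereal
          (INF A \<in> {A. A \<in> sets lebesgue \<and> A \<subseteq> ball 0 2 \<and> emeasure lebesgue A > ennreal \<delta>}.
             (\<integral>\<^sup>+ y\<in>A. ennreal (Kx y) \<partial>lebesgue));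
        T = (\<lambda>y. (norm (8 *\<^sub>R y) powr \<eta> - 1) powr (p - 1) * Kx y);
        Out = UNIV - ball (0::'a) (1/4)
    in
    (p > 2 \<longrightarrow>
      (\<exists>PV. (\<forall>r>0. set_integrable lebesgue ({y. x + y \<in> ball 0 1} - ball 0 r)
               (\<lambda>y. \<bar>beta x - beta (x + y)\<bar> powr (p - 2) * (beta x - beta (x + y)) * Kx y))
         \<and> ((\<lambda>r. LINT y : ({y. x + y \<in> ball 0 1} - ball 0 r) | lebesgue.
               \<bar>beta x - beta (x + y)\<bar> powr (p - 2) * (beta x - beta (x + y)) * Kx y)
             \<longlongrightarrow> PV) (at_right 0)
         \<and> set_integrable lebesgue Out
             (\<lambda>y. \<bar>k * beta x + 2 * (norm (8 *\<^sub>R y) powr \<eta> - 1)\<bar> powr (p - 1) * Kx y)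
         \<and> set_integrable lebesgue Out T
         \<and> ereal (2 powr (p - 2) * k powr (p - 1) * PV
             + 2 powr (p - 2) * (LINT y : Out | lebesgue.
                 \<bar>k * beta x + 2 * (norm (8 *\<^sub>R y) powr \<eta> - 1)\<bar> powr (p - 1) * Kx y)
             + 2 powr (p - 1) * (LINT y : Out | lebesgue. T y)) < RHS))
    \<and> (p < 2 \<longrightarrow>
         integrable lebesgue (\<lambda>y. \<bar>beta x - beta (x + y)\<bar> powr (p - 1) * Kx y)
       \<and> set_integrable lebesgue Out T
       \<and> ereal ((3 powr (p - 1) + 2 powr (p - 1)) * k powr (p - 1) *
             (\<integral>y. \<bar>beta x - beta (x + y)\<bar> powr (p - 1) * Kx y \<partial>lebesgue)
           + 2 powr (p - 1) * (LINT y : Out | lebesgue. T y)) < RHS)"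
proof -
  have "0 \<le> C" "0 \<le> J"
    using parameters unfolding C_def J_def
    by (simp_all add: kernel_class_constant_nonneg set_integral_tail_majorant_nonneg)
  then have "0 \<le> 2 powr (p - 2) * (1 + 2 powr (p - 1)) * C * k powr (p - 1)" "0 \<le> 3 powr (p - 1) * C * k powr (p - 1)"
    "0 \<le> 2 powr (p - 1) * C * k powr (p - 1)" "0 \<le> 2 powr (p - 2) * 4 powr (p - 1) * M * J"
    "0 \<le> 2 powr (p - 1) * M * J"
    using parameters by simp_all
  then have small_gt: "2 powr (p - 2) * (1 + 2 powr (p - 1)) * C * k powr (p - 1)
      + (2 powr (p - 2) * 4 powr (p - 1) + 2 powr (p - 1)) * M * J < \<epsilon>"
    and small_lt: "(3 powr (p - 1) + 2 powr (p - 1)) * C * k powr (p - 1) + 2 powr (p - 1) * M * J < \<epsilon>"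
    using small_k small_\<eta> unfolding distrib_right by linarith+
  have p_large: "1 < p * (1 - s)" if "p < 2"
    using p_small[OF that] parameters by (simp add: field_simps)
  note rhs = ereal_less_kernel_mass_INF[OF \<delta>, folded \<epsilon>_def]
  note gt = superquadratic_estimate[OF x _ k \<eta> small_gt[unfolded C_def J_def], unfolded pv_integrand_def]
  have x1: "norm x < 1"
    using x by simp
  note lt = subquadratic_estimate[OF x1 _ p_large k \<eta> small_lt[unfolded C_def J_def]]
  show ?thesis
    unfolding Let_def
    apply (intro conjI impI)
    subgoal using gt rhs by blast
    subgoal using lt by blast
    subgoal using lt by blast
    subgoal using lt rhs by blast
    done
qed

end

lemma kernel_section_of_kernel:
  fixes K :: "'a::euclidean_space \<Rightarrow> 'a \<Rightarrow> real"
  assumes meas: "(\<lambda>z. K (fst z) (snd z)) \<in> borel_measurable (restrict_space borel (ball 0 2 \<times> UNIV))"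
    and nonneg: "\<forall>x\<in>ball 0 2. \<forall>y. 0 \<le> K x y"
    and symmetric: "\<forall>x\<in>ball 0 2. \<forall>y. K x y = K x (- y)"
    and near: "\<forall>x\<in>ball 0 2. \<forall>y\<in>ball 0 2 - {0}.
      lam * norm y powr (- real DIM('a) - s * p) \<le> K x y \<and> K x y \<le> Lam * norm y powr (- real DIM('a) - s * p)"
    and far: "\<forall>x\<in>ball 0 2. \<forall>y. norm y \<ge> 1/4 \<longrightarrow> K x y \<le> M * norm y powr (- real DIM('a) - \<gamma>)"
    and x: "x \<in> ball 0 2"
    and parameters: "0 < s" "s < 1" "1 < p" "0 < lam" "lam \<le> Lam" "0 < M" "0 < \<gamma>"
  shows "kernel_section (K x) s p lam Lam M \<gamma>"
proof
  have "(\<lambda>y::'a. (x, y)) \<in> borel \<rightarrow>\<^sub>M restrict_space borel (ball 0 2 \<times> UNIV)"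
    using x by (intro measurable_restrict_space2) (auto intro: borel_measurable_continuous_onI continuous_intros)
  from measurable_compose[OF this meas] show "K x \<in> borel_measurable borel"
    by simp
  show "K x (- y) = K x y" for y
    using symmetric x by (metis minus_minus)
qed (use nonneg near far x parameters in auto)

section \<open>Choice of the parameters\<close>

lemma obtain_small_powr:
  fixes c e p :: real
  assumes "0 \<le> c" "0 < e" "1 < p"
  obtains k where "0 < k" "k \<le> 1/2" "c * k powr (p - 1) < e"
proof -
  define k where "k = min (1/2) ((e / (c + 1)) powr (1 / (p - 1)))"
  have k: "0 < k" "k \<le> 1/2"
    using assms by (auto simp: k_def)
  have "k powr (p - 1) \<le> ((e / (c + 1)) powr (1 / (p - 1))) powr (p - 1)"
    using k assms by (intro powr_mono2) (auto simp: k_def)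
  also have "\<dots> = e / (c + 1)"
    using assms by (simp add: powr_powr)
  finally have "c * k powr (p - 1) \<le> c * (e / (c + 1))"
    using assms by (intro mult_left_mono) auto
  also have "\<dots> < e"
    using assms by (simp add: field_simps)
  finally show ?thesis
    using k that by blast
qed

lemma obtain_parameters:
  fixes C \<epsilon> :: real
  assumes p: "1 < p" and \<gamma>: "0 < \<gamma>" and C: "0 \<le> C" and \<epsilon>: "0 < \<epsilon>"
  obtains k \<eta> where "0 < k" "k \<le> 1/2" "0 < \<eta>" "\<eta> * (p - 1) \<le> \<gamma> / 2"
    "(2 powr (p - 2) * (1 + 2 powr (p - 1)) + 3 powr (p - 1) + 2 powr (p - 1)) * C * k powr (p - 1) < \<epsilon> / 2"
    "(2 powr (p - 2) * 4 powr (p - 1) + 2 powr (p - 1)) * M *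
      (LINT y : UNIV - ball (0::'a::euclidean_space) (1/4) | lebesgue. tail_majorant p \<gamma> \<eta> y) < \<epsilon> / 2"
proof -
  obtain \<eta> where "0 < \<eta>" "\<eta> * (p - 1) \<le> \<gamma> / 2"
    "(2 powr (p - 2) * 4 powr (p - 1) + 2 powr (p - 1)) * M *
      (LINT y : UNIV - ball (0::'a) (1/4) | lebesgue. tail_majorant p \<gamma> \<eta> y) < \<epsilon> / 2"
    using obtain_tail_exponent[OF p \<gamma>, where e="\<epsilon> / 2" and c="(2 powr (p - 2) * 4 powr (p - 1) + 2 powr (p - 1)) * M"] \<epsilon>
    by auto
  moreover obtain k where "0 < k" "k \<le> 1/2"
    "(2 powr (p - 2) * (1 + 2 powr (p - 1)) + 3 powr (p - 1) + 2 powr (p - 1)) * C * k powr (p - 1) < \<epsilon> / 2"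
    using obtain_small_powr[where e="\<epsilon> / 2" and c="(2 powr (p - 2) * (1 + 2 powr (p - 1)) + 3 powr (p - 1) + 2 powr (p - 1)) * C"]
      C \<epsilon> p by auto
  ultimately show ?thesis
    using that by blast
qed

theorem proposition3p4:
  fixes s p lam Lam M \<gamma> \<delta> :: real
  assumes s: "0 < s" "s < 1"
    and p: "1 < p"
    and p_small: "p < 2 \<Longrightarrow> p > 1 / (1 - s)"
    and lam: "0 < lam" "lam \<le> Lam"
    and M: "0 < M" and \<gamma>: "0 < \<gamma>"
    and \<delta>: "0 < \<delta>"
  shows "\<exists>k \<eta>. 0 < k \<and> k \<le> 1/2 \<and> 0 < \<eta> \<and>
    (\<forall>K :: 'a::euclidean_space \<Rightarrow> 'a \<Rightarrow> real.
      ((\<lambda>z. K (fst z) (snd z)) \<in> borel_measurable (restrict_space borel (ball 0 2 \<times> UNIV))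
       \<and> (\<forall>x\<in>ball 0 2. \<forall>y. 0 \<le> K x y)
       \<and> (\<forall>x\<in>ball 0 2. \<forall>y. K x y = K x (- y))
       \<and> (\<forall>x\<in>ball 0 2. \<forall>y\<in>ball 0 2 - {0}.
             lam * norm y powr (- real DIM('a) - s * p) \<le> K x y
           \<and> K x y \<le> Lam * norm y powr (- real DIM('a) - s * p))
       \<and> (\<forall>x\<in>ball 0 2. \<forall>y. norm y \<ge> 1/4 \<longrightarrow> K x y \<le> M * norm y powr (- real DIM('a) - \<gamma>)))
      \<longrightarrow> (\<forall>x\<in>ball 0 (3/4).
        let RHS = ereal (2 powr (1 - p)) * enn2ereal
              (INF A \<in> {A. A \<in> sets lebesgue \<and> A \<subseteq> ball 0 2 \<and> emeasure lebesgue A > ennreal \<delta>}.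
                 (\<integral>\<^sup>+ y\<in>A. ennreal (K x y) \<partial>lebesgue));
            T = (\<lambda>y. (norm (8 *\<^sub>R y) powr \<eta> - 1) powr (p - 1) * K x y);
            Out = UNIV - ball (0::'a) (1/4)
        in
        (p > 2 \<longrightarrow>
          (\<exists>PV. (\<forall>r>0. set_integrable lebesgue ({y. x + y \<in> ball 0 1} - ball 0 r)
                   (\<lambda>y. \<bar>beta x - beta (x + y)\<bar> powr (p - 2) * (beta x - beta (x + y)) * K x y))
             \<and> ((\<lambda>r. LINT y : ({y. x + y \<in> ball 0 1} - ball 0 r) | lebesgue.
                   \<bar>beta x - beta (x + y)\<bar> powr (p - 2) * (beta x - beta (x + y)) * K x y)
                 \<longlongrightarrow> PV) (at_right 0)
             \<and> set_integrable lebesgue Out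
                 (\<lambda>y. \<bar>k * beta x + 2 * (norm (8 *\<^sub>R y) powr \<eta> - 1)\<bar> powr (p - 1) * K x y)
             \<and> set_integrable lebesgue Out T
             \<and> ereal (2 powr (p - 2) * k powr (p - 1) * PV
                 + 2 powr (p - 2) * (LINT y : Out | lebesgue.
                     \<bar>k * beta x + 2 * (norm (8 *\<^sub>R y) powr \<eta> - 1)\<bar> powr (p - 1) * K x y)
                 + 2 powr (p - 1) * (LINT y : Out | lebesgue. T y)) < RHS))
        \<and> (p < 2 \<longrightarrow>
             integrable lebesgue (\<lambda>y. \<bar>beta x - beta (x + y)\<bar> powr (p - 1) * K x y)
           \<and> set_integrable lebesgue Out T
           \<and> ereal ((3 powr (p - 1) + 2 powr (p - 1)) * k powr (p - 1) *
                 (\<integral>y. \<bar>beta x - beta (x + y)\<bar> powr (p - 1) * K x y \<partial>lebesgue)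
               + 2 powr (p - 1) * (LINT y : Out | lebesgue. T y)) < RHS)))"
proof -
  define C where "C = kernel_class_constant TYPE('a) s p Lam M \<gamma>"
  define \<epsilon> where "\<epsilon> = 2 powr (1 - p) * (lam * 2 powr (- real DIM('a) - s * p) * \<delta>)"
  have "0 \<le> C" "0 < \<epsilon>"
    using kernel_class_constant_nonneg[of p Lam M s \<gamma>, where 'a='a] p lam M \<delta> by (simp_all add: C_def \<epsilon>_def)
  then obtain k \<eta> where k: "0 < k" "k \<le> 1/2" and \<eta>: "0 < \<eta>" "\<eta> * (p - 1) \<le> \<gamma> / 2"
    and small_k: "(2 powr (p - 2) * (1 + 2 powr (p - 1)) + 3 powr (p - 1) + 2 powr (p - 1)) * C * k powr (p - 1) < \<epsilon> / 2"
    and small_\<eta>: "(2 powr (p - 2) * 4 powr (p - 1) + 2 powr (p - 1)) * M *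
      (LINT y : UNIV - ball (0::'a) (1/4) | lebesgue. tail_majorant p \<gamma> \<eta> y) < \<epsilon> / 2"
    by (rule obtain_parameters[OF p \<gamma>])
  show ?thesis
    apply (rule exI[of _ k], rule exI[of _ \<eta>])
    apply (intro conjI k \<eta>(1) allI impI ballI)
    subgoal premises prems for K x
    proof -
      have "x \<in> ball 0 2"
        using prems(2) by simp
      then interpret kernel_section "K x" s p lam Lam M \<gamma>
        using prems(1) s p lam M \<gamma> by (elim conjE) (rule kernel_section_of_kernel; assumption)
      show ?thesis
        using prems(2)
        by (intro fractional_estimates[OF _ less_imp_le[OF k(1)] less_imp_le[OF \<eta>(1)] \<eta>(2) p_small \<delta>
            small_k[unfolded C_def \<epsilon>_def] small_\<eta>[unfolded \<epsilon>_def]]) simp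
    qed
    done
qed

end
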